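(* Let $\kappa>0$ and let $\sigma:\mathbf{R}\to\mathbf{R}$ be Lipschitz with $\sigma(0)=0$ and $\mathrm{L}_\sigma:=\inf_x|\sigma(x)/x|>0$. Let $u_0,v_0\in\mathcal{D}_{\mathit{exp}}$ with $u_0>0$ on a set of positive Lebesgue measure and $v_0\ge0$, and let $u$ be the mild solution of $\partial_t^2u_t(x)=\kappa^2\partial_x^2u_t(x)+\sigma(u_t(x))\,\partial^2_{tx}W(t,x)$ with initial position $u_0$ and initial velocity $v_0$. If $\beta>0$ and $$0<\alpha<\kappa-\frac{4\beta^2}{\mathrm{L}_\sigma^2},$$ then $\mathcal{M}_{\alpha,\beta}(u)=\infty$.
   Context: $W$ is a two-parameter Brownian sheet. With $\Gamma_t(x):=\frac12\mathbf{1}_{[-\kappa t,\kappa t]}(x)$, the mild solution is the predictable random field with $u_t(x)=\frac12(u_0(x+\kappa t)+u_0(x-\kappa t))+\frac{1}{2\kappa}\int_{x-\kappa t}^{x+\kappa t}v_0(y)\,dy+\int_{[0,t]\times\mathbf{R}}\Gamma_{t-s}(y-x)\sigma(u_s(y))\,W(ds\,dy)$. $\mathcal{D}_{\mathit{exp}}$ is the set of bounded lower semicontinuous $h:\mathbf{R}\to\mathbf{R}_+$ with $h(x)=O(e^{-\rho|x|})$ as $|x|\to\infty$ for some $\rho>0$. For a predictable random field $v$ and $\alpha,\beta>0$, $\mathcal{M}_{\alpha,\beta}(v):=\Big[\int_0^\infty e^{-\beta t}\int_{\{x:|x|\ge\alpha t\}}\mathrm{E}(|v_t(x)|^2)\,dx\,dt\Big]^{1/2}$.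 *)

theory Defs
  imports "HOL-Probability.Probability"
begin

definition lsc_real :: "(real \<Rightarrow> real) \<Rightarrow> bool" where
  "lsc_real h \<longleftrightarrow> (\<forall>x c. c < h x \<longrightarrow> (\<forall>\<^sub>F y in at x. c < h y))"

definition D_exp :: "(real \<Rightarrow> real) set" where
  "D_exp = {h. bounded (range h) \<and> lsc_real h \<and> (\<forall>x. 0 \<le> h x) \<and>
      (\<exists>\<rho>>0. \<exists>C R. \<forall>x. R \<le> \<bar>x\<bar> \<longrightarrow> h x \<le> C * exp (- \<rho> * \<bar>x\<bar>))}"

definition brownian_sheet ::
  "'a measure \<Rightarrow> (real \<Rightarrow> 'a measure) \<Rightarrow> (real \<Rightarrow> real \<Rightarrow> 'a \<Rightarrow> real) \<Rightarrow> bool" where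
  "brownian_sheet M F W \<longleftrightarrow> prob_space M \<and> filtration (space M) F \<and> (\<forall>t. sets (F t) \<subseteq> sets M) \<and>
     (\<forall>t x. 0 \<le> t \<longrightarrow> W t x \<in> borel_measurable (F t)) \<and>
     (\<forall>x. \<forall>\<omega>\<in>space M. W 0 x \<omega> = 0) \<and>
     (\<forall>t. 0 \<le> t \<longrightarrow> (\<forall>\<omega>\<in>space M. W t 0 \<omega> = 0)) \<and>
     (\<forall>s t n (xs :: nat \<Rightarrow> real). 0 \<le> s \<and> s < t \<and> (\<forall>i<n. xs i < xs (Suc i)) \<longrightarrow>
        (let D = (\<lambda>i \<omega>. (W t (xs (Suc i)) \<omega> - W t (xs i) \<omega>) - (W s (xs (Suc i)) \<omega> - W s (xs i) \<omega>)) in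
          (\<forall>i<n. distributed M lborel (D i)
                   (\<lambda>z. ennreal (normal_density 0 (sqrt ((t - s) * (xs (Suc i) - xs i))) z))) \<and>
          prob_space.indep_sets M
            (\<lambda>j. case j of None \<Rightarrow> sets (F s) | Some i \<Rightarrow> sets (vimage_algebra (space M) (D i) borel))
            (insert None (Some ` {..<n}))))"

definition rect_incr :: "(real \<Rightarrow> real \<Rightarrow> 'a \<Rightarrow> real) \<Rightarrow> real \<Rightarrow> real \<Rightarrow> real \<Rightarrow> real \<Rightarrow> 'a \<Rightarrow> real" where
  "rect_incr W a b c d \<omega> = W b d \<omega> - W b c \<omega> - W a d \<omega> + W a c \<omega>"

text \<open>Simple predictable integrands: finite sums of xi(omega) 1_(a,b](s) 1_(c,d](y), xi bounded F_a-measurable.\<close>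

type_synonym 'a simple_field = "(real \<times> real \<times> real \<times> real \<times> ('a \<Rightarrow> real)) list"

definition simple_valid :: "'a measure \<Rightarrow> (real \<Rightarrow> 'a measure) \<Rightarrow> 'a simple_field \<Rightarrow> bool" where
  "simple_valid M F L \<longleftrightarrow> (\<forall>(a, b, c, d, \<xi>) \<in> set L. 0 \<le> a \<and> a < b \<and> c < d \<and>
      \<xi> \<in> borel_measurable (F a) \<and> (\<exists>B. \<forall>\<omega>\<in>space M. \<bar>\<xi> \<omega>\<bar> \<le> B))"

definition simple_eval :: "'a simple_field \<Rightarrow> real \<Rightarrow> real \<Rightarrow> 'a \<Rightarrow> real" where
  "simple_eval L s y \<omega> = (\<Sum>(a, b, c, d, \<xi>) \<leftarrow> L. \<xi> \<omega> * indicator {a<..b} s * indicator {c<..d} y)"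

definition simple_int :: "(real \<Rightarrow> real \<Rightarrow> 'a \<Rightarrow> real) \<Rightarrow> 'a simple_field \<Rightarrow> 'a \<Rightarrow> real" where
  "simple_int W L \<omega> = (\<Sum>(a, b, c, d, \<xi>) \<leftarrow> L. \<xi> \<omega> * rect_incr W a b c d \<omega>)"

definition field_dist2 :: "'a measure \<Rightarrow> (real \<Rightarrow> real \<Rightarrow> 'a \<Rightarrow> real) \<Rightarrow> (real \<Rightarrow> real \<Rightarrow> 'a \<Rightarrow> real) \<Rightarrow> ennreal" where
  "field_dist2 M f g = (\<integral>\<^sup>+ \<omega>. (\<integral>\<^sup>+ z. ennreal ((f (fst z) (snd z) \<omega> - g (fst z) (snd z) \<omega>)\<^sup>2)
                           \<partial>(lborel \<Otimes>\<^sub>M lborel)) \<partial>M)"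

definition has_walsh_integral ::
  "'a measure \<Rightarrow> (real \<Rightarrow> 'a measure) \<Rightarrow> (real \<Rightarrow> real \<Rightarrow> 'a \<Rightarrow> real) \<Rightarrow>
   (real \<Rightarrow> real \<Rightarrow> 'a \<Rightarrow> real) \<Rightarrow> ('a \<Rightarrow> real) \<Rightarrow> bool" where
  "has_walsh_integral M F W f I \<longleftrightarrow> I \<in> borel_measurable M \<and>
     (\<exists>Ls :: nat \<Rightarrow> 'a simple_field. (\<forall>n. simple_valid M F (Ls n)) \<and>
        (\<lambda>n. field_dist2 M f (simple_eval (Ls n))) \<longlonglongrightarrow> 0 \<and>
        (\<lambda>n. \<integral>\<^sup>+ \<omega>. ennreal ((I \<omega> - simple_int W (Ls n) \<omega>)\<^sup>2) \<partial>M) \<longlonglongrightarrow> 0)"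

definition predictable_sigma :: "'a measure \<Rightarrow> (real \<Rightarrow> 'a measure) \<Rightarrow> (real \<times> real \<times> 'a) measure" where
  "predictable_sigma M F = sigma ({0..} \<times> UNIV \<times> space M)
     ({{a<..b} \<times> A \<times> G | a b A G. 0 \<le> a \<and> a \<le> b \<and> A \<in> sets borel \<and> G \<in> sets (F a)} \<union>
      {{0} \<times> A \<times> G | A G. A \<in> sets borel \<and> G \<in> sets (F 0)})"

definition predictable_field :: "'a measure \<Rightarrow> (real \<Rightarrow> 'a measure) \<Rightarrow> (real \<Rightarrow> real \<Rightarrow> 'a \<Rightarrow> real) \<Rightarrow> bool" where
  "predictable_field M F u \<longleftrightarrow> (\<lambda>(t, x, \<omega>). u t x \<omega>) \<in> borel_measurable (predictable_sigma M F)"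

definition wave_Gamma :: "real \<Rightarrow> real \<Rightarrow> real \<Rightarrow> real" where
  "wave_Gamma \<kappa> t x = 1/2 * indicator {- \<kappa> * t .. \<kappa> * t} x"

definition mild_solution ::
  "'a measure \<Rightarrow> (real \<Rightarrow> 'a measure) \<Rightarrow> (real \<Rightarrow> real \<Rightarrow> 'a \<Rightarrow> real) \<Rightarrow> real \<Rightarrow> (real \<Rightarrow> real) \<Rightarrow>
   (real \<Rightarrow> real) \<Rightarrow> (real \<Rightarrow> real) \<Rightarrow> (real \<Rightarrow> real \<Rightarrow> 'a \<Rightarrow> real) \<Rightarrow> bool" where
  "mild_solution M F W \<kappa> \<sigma> u0 v0 u \<longleftrightarrow> predictable_field M F u \<and>
     (\<forall>T\<ge>0. \<exists>C::real. \<forall>t\<in>{0..T}. \<forall>x. (\<integral>\<^sup>+ \<omega>. ennreal ((u t x \<omega>)\<^sup>2) \<partial>M) \<le> ennreal C) \<and>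
     (\<forall>t\<ge>0. \<forall>x. \<exists>J. has_walsh_integral M F W
          (\<lambda>s y \<omega>. indicator {0..t} s * wave_Gamma \<kappa> (t - s) (y - x) * \<sigma> (u s y \<omega>)) J \<and>
        (AE \<omega> in M. u t x \<omega> = (u0 (x + \<kappa> * t) + u0 (x - \<kappa> * t)) / 2
            + 1 / (2 * \<kappa>) * (LINT y:{x - \<kappa> * t .. x + \<kappa> * t}|lborel. v0 y) + J \<omega>))"

definition M_ab :: "'a measure \<Rightarrow> real \<Rightarrow> real \<Rightarrow> (real \<Rightarrow> real \<Rightarrow> 'a \<Rightarrow> real) \<Rightarrow> ennreal" where
  "M_ab M \<alpha> \<beta> v = (let I = (\<integral>\<^sup>+ t \<in> {0..}. ennreal (exp (- \<beta> * t)) *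
        (\<integral>\<^sup>+ x \<in> {x. \<alpha> * t \<le> \<bar>x\<bar>}. (\<integral>\<^sup>+ \<omega>. ennreal ((v t x \<omega>)\<^sup>2) \<partial>M) \<partial>lborel) \<partial>lborel)
     in if I = \<infinity> then \<infinity> else ennreal (sqrt (enn2real I)))"

definition L_sigma :: "(real \<Rightarrow> real) \<Rightarrow> real" where
  "L_sigma \<sigma> = (INF x\<in>-{0}. \<bar>\<sigma> x / x\<bar>)"

end

theory Submission
  imports Defs
begin

text \<open>Let m(t, x) = E u_t(x)^2 and let I(t, x) be the deterministic part of the mild formulation.
  The stochastic integral has mean zero, and its second moment dominates the L2 norm of its
  integrand (the Walsh isometry, recovered as an inequality from the L2 definition of the integral).
  Since the wave kernel is 1/2 on the backward light cone and |\<sigma>(u)| \<ge> L |u| with L = L_sigma \<sigma>,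
  m(t, x) \<ge> I(t, x)^2 + (L^2/4) \<integral>\<integral>_{|y - x| \<le> \<kappa> (t - s)} m(s, y) dy ds.

  Let B(t) be the integral of m(t, .) over x \<ge> \<alpha> t. Integrating first in x, a point (s, y) with
  y \<ge> \<alpha> s lies in the backward light cone of every x in an interval of length (\<kappa> - \<alpha>) (t - s)
  beyond \<alpha> t, so B(t) \<ge> (L^2/4) (\<kappa> - \<alpha>) \<integral>_0^t (t - s) B(s) ds. The Laplace transform H of B at \<beta> therefore
  satisfies H \<ge> L^2 (\<kappa> - \<alpha>) / (4 \<beta>^2) H, with a factor larger than 1 by hypothesis, so H is 0 or
  \<infinity>. It is not 0: a bump of u0 near x0 travels along x = x0 + \<kappa> t, where I stays bounded
  below, and this characteristic eventually lies beyond the line x = \<alpha> t. Finally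
  M_{\<alpha>,\<beta>}(u)^2 \<ge> H.\<close>

lemma integrable_bounded_mult:
  fixes X Y :: "'b \<Rightarrow> real"
  assumes "integrable N Y" "X \<in> borel_measurable N" "\<forall>x\<in>space N. \<bar>X x\<bar> \<le> B"
  shows "integrable N (\<lambda>x. X x * Y x)"
proof (rule Bochner_Integration.integrable_bound[where f="\<lambda>x. B * Y x"])
  show "integrable N (\<lambda>x. B * Y x)" using assms(1) by simp
  show "(\<lambda>x. X x * Y x) \<in> borel_measurable N"
    using assms(1,2) by (intro borel_measurable_times) auto
  show "AE x in N. norm (X x * Y x) \<le> norm (B * Y x)"
  proof (rule AE_I2)
    fix x assume "x \<in> space N"
    then have "\<bar>X x\<bar> * \<bar>Y x\<bar> \<le> \<bar>B\<bar> * \<bar>Y x\<bar>" using assms(3) by (intro mult_right_mono) auto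
    then show "norm (X x * Y x) \<le> norm (B * Y x)" by (simp add: abs_mult)
  qed
qed

lemma bounded_mult:
  fixes f g :: "'b \<Rightarrow> real"
  assumes "\<forall>x\<in>S. \<bar>f x\<bar> \<le> B" "\<forall>x\<in>S. \<bar>g x\<bar> \<le> B'"
  shows "\<forall>x\<in>S. \<bar>f x * g x\<bar> \<le> B * B'"
proof
  fix x assume "x \<in> S"
  then have "\<bar>f x\<bar> \<le> B" "\<bar>g x\<bar> \<le> B'" using assms by auto
  then show "\<bar>f x * g x\<bar> \<le> B * B'"
    unfolding abs_mult by (intro mult_mono) auto
qed

lemma integrable_square_add:
  fixes X Y :: "'b \<Rightarrow> real"
  assumes "X \<in> borel_measurable N" "Y \<in> borel_measurable N"
    "integrable N (\<lambda>x. (X x)\<^sup>2)" "integrable N (\<lambda>x. (Y x)\<^sup>2)"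
  shows "integrable N (\<lambda>x. (X x + Y x)\<^sup>2)"
proof (rule Bochner_Integration.integrable_bound[where f="\<lambda>x. 2 * (X x)\<^sup>2 + 2 * (Y x)\<^sup>2"])
  show "integrable N (\<lambda>x. 2 * (X x)\<^sup>2 + 2 * (Y x)\<^sup>2)" using assms by auto
  show "(\<lambda>x. (X x + Y x)\<^sup>2) \<in> borel_measurable N" using assms by measurable
  show "AE x in N. norm ((X x + Y x)\<^sup>2) \<le> norm (2 * (X x)\<^sup>2 + 2 * (Y x)\<^sup>2)"
  proof (rule AE_I2)
    fix x
    have "0 \<le> (X x - Y x)\<^sup>2" by simp
    then have "(X x + Y x)\<^sup>2 \<le> 2 * (X x)\<^sup>2 + 2 * (Y x)\<^sup>2" by (simp add: power2_eq_square algebra_simps)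
    then show "norm ((X x + Y x)\<^sup>2) \<le> norm (2 * (X x)\<^sup>2 + 2 * (Y x)\<^sup>2)" by simp
  qed
qed

lemma square_sum: "(\<Sum>k<n. f k :: real)\<^sup>2 = (\<Sum>k<n. \<Sum>l<n. f k * f l)"
  by (simp add: power2_eq_square sum_product)

lemma square_le_peter_paul:
  fixes x y \<epsilon> :: real
  assumes "0 < \<epsilon>"
  shows "x\<^sup>2 \<le> (1 + \<epsilon>) * y\<^sup>2 + (1 + 1/\<epsilon>) * (x - y)\<^sup>2"
proof -
  define b where "b = x - y"
  have "0 \<le> (\<epsilon> * y - b)\<^sup>2 / \<epsilon>" using assms by simp
  also have "(\<epsilon> * y - b)\<^sup>2 / \<epsilon> = \<epsilon> * y\<^sup>2 - 2 * y * b + b\<^sup>2 / \<epsilon>"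
    using assms by (simp add: field_simps power2_eq_square)
  finally have "2 * y * b \<le> \<epsilon> * y\<^sup>2 + b\<^sup>2 / \<epsilon>" by simp
  moreover have "x = y + b" by (simp add: b_def)
  ultimately show ?thesis unfolding b_def[symmetric] by (simp add: power2_eq_square field_simps)
qed

lemma nn_integral_square_le_peter_paul:
  fixes f g :: "'b \<Rightarrow> real"
  assumes [measurable]: "f \<in> borel_measurable N" "g \<in> borel_measurable N" and "0 < \<epsilon>"
  shows "(\<integral>\<^sup>+x. ennreal ((f x)\<^sup>2) \<partial>N)
    \<le> ennreal (1 + \<epsilon>) * (\<integral>\<^sup>+x. ennreal ((g x)\<^sup>2) \<partial>N) + ennreal (1 + 1/\<epsilon>) * (\<integral>\<^sup>+x. ennreal ((f x - g x)\<^sup>2) \<partial>N)"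
proof -
  have "(\<integral>\<^sup>+x. ennreal ((f x)\<^sup>2) \<partial>N)
      \<le> (\<integral>\<^sup>+x. ennreal (1 + \<epsilon>) * ennreal ((g x)\<^sup>2) + ennreal (1 + 1/\<epsilon>) * ennreal ((f x - g x)\<^sup>2) \<partial>N)"
  proof (rule nn_integral_mono)
    fix x
    have "ennreal ((f x)\<^sup>2) \<le> ennreal ((1 + \<epsilon>) * (g x)\<^sup>2 + (1 + 1/\<epsilon>) * (f x - g x)\<^sup>2)"
      using square_le_peter_paul[OF assms(3)] by (rule ennreal_leI)
    also have "\<dots> = ennreal (1 + \<epsilon>) * ennreal ((g x)\<^sup>2) + ennreal (1 + 1/\<epsilon>) * ennreal ((f x - g x)\<^sup>2)"
      using assms(3) by (subst ennreal_plus) (auto simp: ennreal_mult)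
    finally show "ennreal ((f x)\<^sup>2)
        \<le> ennreal (1 + \<epsilon>) * ennreal ((g x)\<^sup>2) + ennreal (1 + 1/\<epsilon>) * ennreal ((f x - g x)\<^sup>2)" .
  qed
  also have "\<dots> = ennreal (1 + \<epsilon>) * (\<integral>\<^sup>+x. ennreal ((g x)\<^sup>2) \<partial>N)
      + ennreal (1 + 1/\<epsilon>) * (\<integral>\<^sup>+x. ennreal ((f x - g x)\<^sup>2) \<partial>N)"
    by (simp add: nn_integral_add nn_integral_cmult)
  finally show ?thesis .
qed

lemma nn_integral_iterated_square_le_peter_paul:
  fixes f g :: "'b \<times> 'c \<Rightarrow> real"
  assumes "sigma_finite_measure N"
    and [measurable]: "f \<in> borel_measurable (K \<Otimes>\<^sub>M N)" "g \<in> borel_measurable (K \<Otimes>\<^sub>M N)" and "0 < \<epsilon>"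
  shows "(\<integral>\<^sup>+x. \<integral>\<^sup>+y. ennreal ((f (x, y))\<^sup>2) \<partial>N \<partial>K)
    \<le> ennreal (1 + \<epsilon>) * (\<integral>\<^sup>+x. \<integral>\<^sup>+y. ennreal ((g (x, y))\<^sup>2) \<partial>N \<partial>K)
      + ennreal (1 + 1/\<epsilon>) * (\<integral>\<^sup>+x. \<integral>\<^sup>+y. ennreal ((f (x, y) - g (x, y))\<^sup>2) \<partial>N \<partial>K)"
proof -
  have "(\<lambda>p. ennreal ((f p)\<^sup>2)) \<in> borel_measurable (K \<Otimes>\<^sub>M N)"
    and "(\<lambda>p. ennreal ((g p)\<^sup>2)) \<in> borel_measurable (K \<Otimes>\<^sub>M N)"
    and "(\<lambda>p. ennreal ((f p - g p)\<^sup>2)) \<in> borel_measurable (K \<Otimes>\<^sub>M N)"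
    by measurable
  from this[THEN sigma_finite_measure.nn_integral_fst[OF assms(1)]] show ?thesis
    using nn_integral_square_le_peter_paul[OF assms(2-4)] by simp
qed

lemma ennreal_le_of_forall_le_scaled:
  fixes x y :: ennreal
  assumes "\<And>\<epsilon>. 0 < \<epsilon> \<Longrightarrow> x \<le> ennreal ((1 + \<epsilon>)\<^sup>2) * y"
  shows "x \<le> y"
proof -
  have "((\<lambda>\<epsilon>. ennreal ((1 + \<epsilon>)\<^sup>2) * y) \<longlongrightarrow> ennreal ((1 + 0)\<^sup>2) * y) (at_right 0)"
    by (intro tendsto_mult_ennreal tendsto_ennrealI tendsto_intros) auto
  moreover have "\<forall>\<^sub>F \<epsilon> in at_right 0. x \<le> ennreal ((1 + \<epsilon>)\<^sup>2) * y"
    using assms by (intro eventually_at_rightI[of 0 1]) auto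
  ultimately show ?thesis
    using tendsto_le[OF trivial_limit_at_right_real _ tendsto_const] by simp
qed

lemma nn_integral_lborel_rotate3:
  fixes G :: "real \<Rightarrow> real \<Rightarrow> real \<Rightarrow> ennreal"
  assumes "(\<lambda>p. G (fst (fst p)) (snd (fst p)) (snd p)) \<in> borel_measurable ((lborel \<Otimes>\<^sub>M lborel) \<Otimes>\<^sub>M lborel)"
  shows "(\<integral>\<^sup>+x. \<integral>\<^sup>+s. \<integral>\<^sup>+y. G x s y \<partial>lborel \<partial>lborel \<partial>lborel) = (\<integral>\<^sup>+s. \<integral>\<^sup>+y. \<integral>\<^sup>+x. G x s y \<partial>lborel \<partial>lborel \<partial>lborel)"
proof -
  have "(\<lambda>(x, s). \<integral>\<^sup>+y. G x s y \<partial>lborel) \<in> borel_measurable (lborel \<Otimes>\<^sub>M lborel)"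
    using lborel.borel_measurable_nn_integral_fst[OF assms] by (simp add: split_beta)
  then have "(\<integral>\<^sup>+x. \<integral>\<^sup>+s. \<integral>\<^sup>+y. G x s y \<partial>lborel \<partial>lborel \<partial>lborel) = (\<integral>\<^sup>+s. \<integral>\<^sup>+x. \<integral>\<^sup>+y. G x s y \<partial>lborel \<partial>lborel \<partial>lborel)"
    by (rule lborel_pair.Fubini'[symmetric])
  also have "\<dots> = (\<integral>\<^sup>+s. \<integral>\<^sup>+y. \<integral>\<^sup>+x. G x s y \<partial>lborel \<partial>lborel \<partial>lborel)"
  proof (rule nn_integral_cong)
    fix s :: real
    have "(\<lambda>(x::real, y::real). ((x, s), y)) \<in> lborel \<Otimes>\<^sub>M lborel \<rightarrow>\<^sub>M (lborel \<Otimes>\<^sub>M lborel) \<Otimes>\<^sub>M lborel"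
      by measurable
    from measurable_comp[OF this assms]
    have "(\<lambda>(x, y). G x s y) \<in> borel_measurable (lborel \<Otimes>\<^sub>M lborel)"
      by (simp add: comp_def split_beta)
    then show "(\<integral>\<^sup>+x. \<integral>\<^sup>+y. G x s y \<partial>lborel \<partial>lborel) = (\<integral>\<^sup>+y. \<integral>\<^sup>+x. G x s y \<partial>lborel \<partial>lborel)"
      by (rule lborel_pair.Fubini'[symmetric])
  qed
  finally show ?thesis .
qed

lemma nn_integral_Ici_mult_exp:
  fixes \<beta> :: real
  assumes "0 < \<beta>"
  shows "(\<integral>\<^sup>+r. ennreal (indicator {0..} r * r * exp (- \<beta> * r)) \<partial>lborel) = ennreal (1 / \<beta>\<^sup>2)"
proof -
  interpret erlang: prob_space "density lborel (\<lambda>x. ennreal (erlang_density 1 \<beta> x))"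
    using prob_space_erlang_density[OF assms] .
  have density: "ennreal (erlang_density 1 \<beta> x) = ennreal (\<beta>\<^sup>2) * ennreal (indicator {0..} x * x * exp (- \<beta> * x))"
    for x :: real
  proof -
    have "erlang_density 1 \<beta> x = \<beta>\<^sup>2 * (indicator {0..} x * x * exp (- \<beta> * x))"
      by (simp add: erlang_density_def indicator_def power2_eq_square)
    moreover have "0 \<le> indicator {0..} x * x * exp (- \<beta> * x)" by (simp add: indicator_def)
    ultimately show ?thesis by (simp add: ennreal_mult)
  qed
  have "1 = emeasure (density lborel (\<lambda>x. ennreal (erlang_density 1 \<beta> x))) UNIV"
    using erlang.emeasure_space_1 by simp
  also have "\<dots> = (\<integral>\<^sup>+x. ennreal (erlang_density 1 \<beta> x) \<partial>lborel)"
    by (subst emeasure_density) auto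
  also have "\<dots> = ennreal (\<beta>\<^sup>2) * (\<integral>\<^sup>+r. ennreal (indicator {0..} r * r * exp (- \<beta> * r)) \<partial>lborel)"
    unfolding density by (rule nn_integral_cmult) auto
  finally have "ennreal (1 / \<beta>\<^sup>2) * (ennreal (\<beta>\<^sup>2) * (\<integral>\<^sup>+r. ennreal (indicator {0..} r * r * exp (- \<beta> * r)) \<partial>lborel))
      = ennreal (1 / \<beta>\<^sup>2)"
    by simp
  then show ?thesis
    using assms by (simp add: mult.assoc[symmetric] ennreal_mult[symmetric])
qed

lemma nn_integral_shifted_mult_exp:
  fixes \<beta> s :: real
  assumes "0 < \<beta>"
  shows "(\<integral>\<^sup>+t. indicator {s..} t * ennreal (exp (- \<beta> * t) * (t - s)) \<partial>lborel) = ennreal (exp (- \<beta> * s) / \<beta>\<^sup>2)"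
proof -
  have "(\<integral>\<^sup>+t. indicator {s..} t * ennreal (exp (- \<beta> * t) * (t - s)) \<partial>lborel)
      = ennreal \<bar>1\<bar> * (\<integral>\<^sup>+r. indicator {s..} (s + 1 * r) *
          ennreal (exp (- \<beta> * (s + 1 * r)) * ((s + 1 * r) - s)) \<partial>lborel)"
    by (rule nn_integral_real_affine) auto
  also have "\<dots> = (\<integral>\<^sup>+r. ennreal (exp (- \<beta> * s)) * ennreal (indicator {0..} r * r * exp (- \<beta> * r)) \<partial>lborel)"
  proof -
    have "indicator {s..} (s + 1 * r) * ennreal (exp (- \<beta> * (s + 1 * r)) * ((s + 1 * r) - s))
        = ennreal (exp (- \<beta> * s)) * ennreal (indicator {0..} r * r * exp (- \<beta> * r))" for r :: real
    proof -
      have "exp (- \<beta> * (s + r)) * r = exp (- \<beta> * s) * (r * exp (- \<beta> * r))"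
        by (simp add: algebra_simps exp_add[symmetric])
      then show ?thesis by (cases "0 \<le> r") (simp_all add: ennreal_mult[symmetric] indicator_def)
    qed
    then show ?thesis by simp
  qed
  also have "\<dots> = ennreal (exp (- \<beta> * s)) * ennreal (1 / \<beta>\<^sup>2)"
    using nn_integral_Ici_mult_exp[OF assms] by (subst nn_integral_cmult) auto
  also have "\<dots> = ennreal (exp (- \<beta> * s) / \<beta>\<^sup>2)" by (simp add: ennreal_mult[symmetric])
  finally show ?thesis .
qed

section \<open>Increments of the Brownian sheet and the Walsh isometry\<close>

definition overlap :: "real \<Rightarrow> real \<Rightarrow> real \<Rightarrow> real \<Rightarrow> real" where
  "overlap c d c' d' = max 0 (min d d' - max c c')"

lemma overlap_commute: "overlap c' d' c d = overlap c d c' d'"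
  by (simp add: overlap_def min.commute max.commute)

lemma integral_rectangle_indicators_product:
  fixes a b c d a' b' c' d' :: real
  defines "f \<equiv> (\<lambda>z. indicator {a<..b} (fst z) * indicator {c<..d} (snd z) *
       (indicator {a'<..b'} (fst z) * indicator {c'<..d'} (snd z)) :: real)"
  shows "integrable (lborel \<Otimes>\<^sub>M lborel) f"
    and "integral\<^sup>L (lborel \<Otimes>\<^sub>M lborel) f = overlap a b a' b' * overlap c d c' d'"
proof -
  have emeasure_Ioc: "emeasure lborel {p<..q::real} = ennreal (max 0 (q - p))" for p q
    by (cases "p \<le> q") (auto simp: emeasure_lborel_Ioc max_def)
  define A where "A = {max a a'<..min b b'}"
  define B where "B = {max c c'<..min d d'}"
  have f_eq: "f = indicator (A \<times> B)"
    by (auto simp: f_def A_def B_def fun_eq_iff indicator_def)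
  have AB: "A \<times> B \<in> sets (lborel \<Otimes>\<^sub>M lborel)" by (simp add: A_def B_def)
  have measure_AB: "emeasure (lborel \<Otimes>\<^sub>M lborel) (A \<times> B) = ennreal (overlap a b a' b' * overlap c d c' d')"
    by (simp add: lborel.emeasure_pair_measure_Times A_def B_def emeasure_Ioc overlap_def ennreal_mult)
  show "integrable (lborel \<Otimes>\<^sub>M lborel) f" unfolding f_eq
    by (rule integrable_real_indicator[OF AB]) (simp add: measure_AB)
  show "integral\<^sup>L (lborel \<Otimes>\<^sub>M lborel) f = overlap a b a' b' * overlap c d c' d'"
    unfolding f_eq using measure_AB by (simp add: measure_def overlap_def space_pair_measure)
qed

fun simple_term_covariance ::
  "'a measure \<Rightarrow> real \<times> real \<times> real \<times> real \<times> ('a \<Rightarrow> real) \<Rightarrow> real \<times> real \<times> real \<times> real \<times> ('a \<Rightarrow> real) \<Rightarrow> real"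
where
  "simple_term_covariance M (a, b, c, d, \<xi>) (a', b', c', d', \<xi>') =
     (\<integral>\<omega>. \<xi> \<omega> * \<xi>' \<omega> \<partial>M) * (overlap a b a' b' * overlap c d c' d')"

lemma simple_int_nth: "simple_int W L \<omega> = (\<Sum>k<length L. case L!k of (a, b, c, d, \<xi>) \<Rightarrow> \<xi> \<omega> * rect_incr W a b c d \<omega>)"
  unfolding simple_int_def sum_list_sum_nth by (simp add: atLeast0LessThan)

definition simple_coeff :: "'a simple_field \<Rightarrow> nat \<Rightarrow> 'a \<Rightarrow> real" where
  "simple_coeff L k = (case L!k of (a, b, c, d, \<xi>) \<Rightarrow> \<xi>)"

definition simple_cell :: "'a simple_field \<Rightarrow> nat \<Rightarrow> real \<times> real \<Rightarrow> real" where
  "simple_cell L k z = (case L!k of (a, b, c, d, \<xi>) \<Rightarrow> indicator {a<..b} (fst z) * indicator {c<..d} (snd z))"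

lemma simple_eval_nth:
  "simple_eval L (fst z) (snd z) \<omega> = (\<Sum>k<length L. simple_coeff L k \<omega> * simple_cell L k z)"
  unfolding simple_eval_def sum_list_sum_nth simple_coeff_def simple_cell_def
  by (auto simp: atLeast0LessThan split: prod.splits intro!: sum.cong)

locale brownian_sheet_space =
  fixes M :: "'a measure" and F :: "real \<Rightarrow> 'a measure" and W :: "real \<Rightarrow> real \<Rightarrow> 'a \<Rightarrow> real"
  assumes brownian_sheet: "brownian_sheet M F W"
begin

sublocale prob_space M
  using brownian_sheet by (simp add: brownian_sheet_def)

sublocale filtration "space M" F
  using brownian_sheet by (simp add: brownian_sheet_def)

lemma sets_F_subset: "sets (F t) \<subseteq> sets M"
  using brownian_sheet by (simp add: brownian_sheet_def)

lemma measurable_F_imp_measurable: "f \<in> borel_measurable (F t) \<Longrightarrow> f \<in> borel_measurable M"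
  by (rule measurable_from_subalg[of _ "F t"]) (auto simp: subalgebra_def space_F sets_F_subset)

lemma measurable_F_mono: "s \<le> t \<Longrightarrow> f \<in> borel_measurable (F s) \<Longrightarrow> f \<in> borel_measurable (F t)"
  by (rule measurable_from_subalg[of _ "F s"]) (auto simp: subalgebra_def space_F sets_F_mono)

lemma integrable_bounded:
  fixes X :: "'a \<Rightarrow> real"
  assumes "X \<in> borel_measurable M" "\<forall>\<omega>\<in>space M. \<bar>X \<omega>\<bar> \<le> B"
  shows "integrable M X"
  using assms by (intro integrable_const_bound[where B=B]) auto

abbreviation R :: "real \<Rightarrow> real \<Rightarrow> real \<Rightarrow> real \<Rightarrow> 'a \<Rightarrow> real" where
  "R \<equiv> rect_incr W"

lemma rect_incr_measurable_F:
  assumes "0 \<le> s" "s \<le> t"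
  shows "R s t c d \<in> borel_measurable (F t)"
proof -
  have W: "W r x \<in> borel_measurable (F r)" if "0 \<le> r" for r x
    using brownian_sheet that by (simp add: brownian_sheet_def)
  show ?thesis unfolding rect_incr_def
    using W[of t] measurable_F_mono[OF assms(2) W[OF assms(1)]] assms
    by (intro borel_measurable_add borel_measurable_diff) auto
qed

lemma rect_incr_measurable: "0 \<le> s \<Longrightarrow> s \<le> t \<Longrightarrow> R s t c d \<in> borel_measurable M"
  using rect_incr_measurable_F measurable_F_imp_measurable by blast

lemma rect_incr_same_time [simp]: "R t t c d = (\<lambda>\<omega>. 0)"
  and rect_incr_same_space [simp]: "R s t c c = (\<lambda>\<omega>. 0)"
  by (simp_all add: rect_incr_def fun_eq_iff)

lemma rect_incr_partition_distributed_indep: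
  assumes "0 \<le> s" "s < t" "\<forall>i<n. xs i < xs (Suc i)"
  shows "\<forall>i<n. distributed M lborel (R s t (xs i) (xs (Suc i)))
           (\<lambda>z. ennreal (normal_density 0 (sqrt ((t - s) * (xs (Suc i) - xs i))) z))"
    and "indep_sets (\<lambda>j. case j of None \<Rightarrow> sets (F s)
           | Some i \<Rightarrow> sets (vimage_algebra (space M) (R s t (xs i) (xs (Suc i))) borel))
           (insert None (Some ` {..<n}))"
proof -
  have incr: "(\<lambda>\<omega>. (W t (xs (Suc i)) \<omega> - W t (xs i) \<omega>) - (W s (xs (Suc i)) \<omega> - W s (xs i) \<omega>))
      = R s t (xs i) (xs (Suc i))" for i
    by (simp add: rect_incr_def fun_eq_iff)
  have "\<forall>s t n (xs :: nat \<Rightarrow> real). 0 \<le> s \<and> s < t \<and> (\<forall>i<n. xs i < xs (Suc i)) \<longrightarrow>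
        (let D = (\<lambda>i \<omega>. (W t (xs (Suc i)) \<omega> - W t (xs i) \<omega>) - (W s (xs (Suc i)) \<omega> - W s (xs i) \<omega>)) in
          (\<forall>i<n. distributed M lborel (D i)
                   (\<lambda>z. ennreal (normal_density 0 (sqrt ((t - s) * (xs (Suc i) - xs i))) z))) \<and>
          indep_sets
            (\<lambda>j. case j of None \<Rightarrow> sets (F s) | Some i \<Rightarrow> sets (vimage_algebra (space M) (D i) borel))
            (insert None (Some ` {..<n})))"
    using brownian_sheet unfolding brownian_sheet_def by (elim conjE) assumption
  then have "(let D = (\<lambda>i \<omega>. (W t (xs (Suc i)) \<omega> - W t (xs i) \<omega>) - (W s (xs (Suc i)) \<omega> - W s (xs i) \<omega>)) in
          (\<forall>i<n. distributed M lborel (D i)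
                   (\<lambda>z. ennreal (normal_density 0 (sqrt ((t - s) * (xs (Suc i) - xs i))) z))) \<and>
          indep_sets
            (\<lambda>j. case j of None \<Rightarrow> sets (F s) | Some i \<Rightarrow> sets (vimage_algebra (space M) (D i) borel))
            (insert None (Some ` {..<n})))"
    using assms by blast
  then show "\<forall>i<n. distributed M lborel (R s t (xs i) (xs (Suc i)))
           (\<lambda>z. ennreal (normal_density 0 (sqrt ((t - s) * (xs (Suc i) - xs i))) z))"
    and "indep_sets (\<lambda>j. case j of None \<Rightarrow> sets (F s)
           | Some i \<Rightarrow> sets (vimage_algebra (space M) (R s t (xs i) (xs (Suc i))) borel))
           (insert None (Some ` {..<n}))"
    unfolding Let_def incr by auto
qed

lemma indep_vars_past_rect_incrs:
  assumes "0 \<le> s" "s < t" "\<forall>i<n. xs i < xs (Suc i)" "Z \<in> borel_measurable (F s)"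
    and g: "\<And>i. g i \<in> borel_measurable borel"
  shows "indep_vars (\<lambda>_. borel)
           (\<lambda>k. case k of None \<Rightarrow> Z | Some i \<Rightarrow> (\<lambda>\<omega>. g i (R s t (xs i) (xs (Suc i)) \<omega>)))
           (insert None (Some ` {..<n}))"
  unfolding indep_vars_def2
proof (intro conjI ballI)
  have incr: "R s t (xs i) (xs (Suc i)) \<in> borel_measurable M" for i
    using rect_incr_measurable assms by simp
  fix k assume "k \<in> insert None (Some ` {..<n})"
  show "random_variable borel
          (case k of None \<Rightarrow> Z | Some i \<Rightarrow> (\<lambda>\<omega>. g i (R s t (xs i) (xs (Suc i)) \<omega>)))"
    using measurable_F_imp_measurable[OF assms(4)] measurable_compose[OF incr g]
    by (cases k) (auto simp: comp_def)
next
  show "indep_sets (\<lambda>k. {(case k of None \<Rightarrow> Z | Some i \<Rightarrow> (\<lambda>\<omega>. g i (R s t (xs i) (xs (Suc i)) \<omega>)))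
      -` A \<inter> space M |A. A \<in> sets borel}) (insert None (Some ` {..<n}))"
  proof (rule indep_sets_mono_sets[OF rect_incr_partition_distributed_indep(2)[OF assms(1-3)]])
    fix k assume "k \<in> insert None (Some ` {..<n})"
    show "{(case k of None \<Rightarrow> Z | Some i \<Rightarrow> (\<lambda>\<omega>. g i (R s t (xs i) (xs (Suc i)) \<omega>))) -` A \<inter> space M
            |A. A \<in> sets borel}
          \<subseteq> (case k of None \<Rightarrow> sets (F s)
             | Some i \<Rightarrow> sets (vimage_algebra (space M) (R s t (xs i) (xs (Suc i))) borel))"
    proof (cases k)
      case None
      then show ?thesis using assms(4) by (auto simp: measurable_def space_F)
    next
      case (Some i)
      have "(\<lambda>\<omega>. g i (R s t (xs i) (xs (Suc i)) \<omega>)) -` A \<inter> space M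
          \<in> sets (vimage_algebra (space M) (R s t (xs i) (xs (Suc i))) borel)"
        if "A \<in> sets borel" for A
      proof -
        have "g i -` A \<in> sets borel" using g[of i] that by (auto simp: measurable_def)
        then have "R s t (xs i) (xs (Suc i)) -` (g i -` A) \<inter> space M
            \<in> sets (vimage_algebra (space M) (R s t (xs i) (xs (Suc i))) borel)"
          by (intro in_vimage_algebra) auto
        then show ?thesis by (simp add: vimage_def)
      qed
      then show ?thesis using Some by auto
    qed
  qed
qed

lemma rect_incr_distributed:
  assumes "0 \<le> s" "s < t" "c < d"
  shows "distributed M lborel (R s t c d) (\<lambda>z. ennreal (normal_density 0 (sqrt ((t - s) * (d - c))) z))"
  using rect_incr_partition_distributed_indep(1)[OF assms(1,2), of 1 "\<lambda>i. if i = 0 then c else d"] assms(3)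
  by simp

lemma rect_incr_mean:
  assumes "0 \<le> s" "s \<le> t" "c \<le> d"
  shows "integrable M (R s t c d)" "expectation (R s t c d) = 0"
proof -
  have "integrable M (R s t c d) \<and> expectation (R s t c d) = 0"
  proof (cases "s < t \<and> c < d")
    case True
    then have distr: "distributed M lborel (R s t c d) (\<lambda>z. ennreal (normal_density 0 (sqrt ((t - s) * (d - c))) z))"
      using rect_incr_distributed assms by auto
    have pos: "0 < sqrt ((t - s) * (d - c))" using True by simp
    have "integrable M (R s t c d)"
      by (rule distributed_integrable_var[OF distr]) (auto intro: integrable_normal_moment_nz_1[OF pos])
    then show ?thesis using normal_distributed_expectation[OF pos distr] by simp
  next
    case False
    then have "s = t \<or> c = d" using assms by auto
    then show ?thesis by auto
  qed
  then show "integrable M (R s t c d)" "expectation (R s t c d) = 0" by auto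
qed

lemma rect_incr_second_moment:
  assumes "0 \<le> s" "s \<le> t" "c \<le> d"
  shows "integrable M (\<lambda>\<omega>. (R s t c d \<omega>)\<^sup>2)"
    "expectation (\<lambda>\<omega>. (R s t c d \<omega>)\<^sup>2) = (t - s) * (d - c)"
proof -
  have "integrable M (\<lambda>\<omega>. (R s t c d \<omega>)\<^sup>2) \<and> expectation (\<lambda>\<omega>. (R s t c d \<omega>)\<^sup>2) = (t - s) * (d - c)"
  proof (cases "s < t \<and> c < d")
    case True
    define \<sigma> where "\<sigma> = sqrt ((t - s) * (d - c))"
    have distr: "distributed M lborel (R s t c d) (\<lambda>z. ennreal (normal_density 0 \<sigma> z))"
      using rect_incr_distributed assms True by (auto simp: \<sigma>_def)
    have pos: "0 < \<sigma>" using True by (simp add: \<sigma>_def)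
    have "integrable M (\<lambda>\<omega>. (R s t c d \<omega>)\<^sup>2)"
      using distributed_integrable[OF distr, of "\<lambda>x. x\<^sup>2"] integrable_normal_moment[OF pos, of 0 2]
      by simp
    moreover have "expectation (\<lambda>\<omega>. (R s t c d \<omega>)\<^sup>2) = \<sigma>\<^sup>2"
      using normal_distributed_variance[OF pos distr] normal_distributed_expectation[OF pos distr] by simp
    ultimately show ?thesis using True by (simp add: \<sigma>_def)
  next
    case False
    then have "s = t \<or> c = d" using assms by auto
    then show ?thesis by auto
  qed
  then show "integrable M (\<lambda>\<omega>. (R s t c d \<omega>)\<^sup>2)"
    "expectation (\<lambda>\<omega>. (R s t c d \<omega>)\<^sup>2) = (t - s) * (d - c)" by auto
qed

lemma expectation_past_mult_rect_incr_transform: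
  fixes Z :: "'a \<Rightarrow> real" and g :: "real \<Rightarrow> real"
  assumes "0 \<le> s" "s < t" "c < d" "Z \<in> borel_measurable (F s)" "integrable M Z"
    and g: "g \<in> borel_measurable borel" "integrable M (\<lambda>\<omega>. g (R s t c d \<omega>))"
  shows "integrable M (\<lambda>\<omega>. Z \<omega> * g (R s t c d \<omega>))"
    "expectation (\<lambda>\<omega>. Z \<omega> * g (R s t c d \<omega>)) = expectation Z * expectation (\<lambda>\<omega>. g (R s t c d \<omega>))"
proof -
  define xs where "xs = (\<lambda>i::nat. if i = 0 then c else d)"
  have indep: "indep_vars (\<lambda>_. borel)
      (\<lambda>k. case k of None \<Rightarrow> Z | Some i \<Rightarrow> (\<lambda>\<omega>. (\<lambda>_. g) i (R s t (xs i) (xs (Suc i)) \<omega>)))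
      (insert None (Some ` {..<1}))"
    by (rule indep_vars_past_rect_incrs) (use assms g in \<open>auto simp: xs_def\<close>)
  have two: "insert None (Some ` {..<1::nat}) = {None, Some 0}" by auto
  have factors: "integrable M ((\<lambda>k. case k of None \<Rightarrow> Z | Some i \<Rightarrow> (\<lambda>\<omega>. (\<lambda>_. g) i (R s t (xs i) (xs (Suc i)) \<omega>))) k)"
    if "k \<in> {None, Some 0}" for k
    using that assms g by (auto simp: xs_def)
  from indep_vars_integrable[OF _ indep[unfolded two] factors]
    indep_vars_lebesgue_integral[OF _ indep[unfolded two] factors]
  show "integrable M (\<lambda>\<omega>. Z \<omega> * g (R s t c d \<omega>))"
    "expectation (\<lambda>\<omega>. Z \<omega> * g (R s t c d \<omega>)) = expectation Z * expectation (\<lambda>\<omega>. g (R s t c d \<omega>))"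
    by (simp_all add: xs_def)
qed

lemma expectation_past_mult_rect_incr:
  assumes "0 \<le> s" "s \<le> t" "c \<le> d" "Z \<in> borel_measurable (F s)" "integrable M Z"
  shows "integrable M (\<lambda>\<omega>. Z \<omega> * R s t c d \<omega>)" "expectation (\<lambda>\<omega>. Z \<omega> * R s t c d \<omega>) = 0"
proof -
  have "integrable M (\<lambda>\<omega>. Z \<omega> * R s t c d \<omega>) \<and> expectation (\<lambda>\<omega>. Z \<omega> * R s t c d \<omega>) = 0"
  proof (cases "s < t \<and> c < d")
    case True
    then show ?thesis
      using expectation_past_mult_rect_incr_transform[of s t c d Z "\<lambda>x. x"] rect_incr_mean assms by simp
  next
    case False
    then have "s = t \<or> c = d" using assms by auto
    then show ?thesis by auto
  qed
  then show "integrable M (\<lambda>\<omega>. Z \<omega> * R s t c d \<omega>)" "expectation (\<lambda>\<omega>. Z \<omega> * R s t c d \<omega>) = 0"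
    by auto
qed

lemma expectation_past_mult_rect_incr_sq:
  assumes "0 \<le> s" "s \<le> t" "c \<le> d" "Z \<in> borel_measurable (F s)" "integrable M Z"
  shows "integrable M (\<lambda>\<omega>. Z \<omega> * (R s t c d \<omega>)\<^sup>2)"
    "expectation (\<lambda>\<omega>. Z \<omega> * (R s t c d \<omega>)\<^sup>2) = expectation Z * ((t - s) * (d - c))"
proof -
  have "integrable M (\<lambda>\<omega>. Z \<omega> * (R s t c d \<omega>)\<^sup>2) \<and>
      expectation (\<lambda>\<omega>. Z \<omega> * (R s t c d \<omega>)\<^sup>2) = expectation Z * ((t - s) * (d - c))"
  proof (cases "s < t \<and> c < d")
    case True
    then show ?thesis
      using expectation_past_mult_rect_incr_transform[of s t c d Z "\<lambda>x. x\<^sup>2"] rect_incr_second_moment assms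
      by simp
  next
    case False
    then have "s = t \<or> c = d" using assms by auto
    then show ?thesis by auto
  qed
  then show "integrable M (\<lambda>\<omega>. Z \<omega> * (R s t c d \<omega>)\<^sup>2)"
    "expectation (\<lambda>\<omega>. Z \<omega> * (R s t c d \<omega>)\<^sup>2) = expectation Z * ((t - s) * (d - c))" by auto
qed

lemma expectation_past_mult_partition_rect_incrs:
  assumes "0 \<le> s" "s < t" "\<forall>i<n. xs i < xs (Suc i)" "Z \<in> borel_measurable (F s)" "integrable M Z"
    and "i < n" "j < n" "i \<noteq> j"
  shows "integrable M (\<lambda>\<omega>. Z \<omega> * R s t (xs i) (xs (Suc i)) \<omega> * R s t (xs j) (xs (Suc j)) \<omega>)"
    "expectation (\<lambda>\<omega>. Z \<omega> * R s t (xs i) (xs (Suc i)) \<omega> * R s t (xs j) (xs (Suc j)) \<omega>) = 0"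
proof -
  have indep: "indep_vars (\<lambda>_. borel)
      (\<lambda>k. case k of None \<Rightarrow> Z | Some i \<Rightarrow> (\<lambda>\<omega>. (\<lambda>_ x. x) i (R s t (xs i) (xs (Suc i)) \<omega>)))
      {None, Some i, Some j}"
    by (rule indep_vars_subset[OF indep_vars_past_rect_incrs[OF assms(1-4)]]) (use assms in auto)
  have mean: "integrable M (R s t (xs k) (xs (Suc k)))" "expectation (R s t (xs k) (xs (Suc k))) = 0"
    if "k < n" for k
    using rect_incr_mean[OF assms(1), of t "xs k" "xs (Suc k)"] assms that by (auto simp: less_imp_le)
  have "integrable M ((\<lambda>k. case k of None \<Rightarrow> Z | Some i \<Rightarrow> (\<lambda>\<omega>. (\<lambda>_ x. x) i (R s t (xs i) (xs (Suc i)) \<omega>))) k)"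
    if "k \<in> {None, Some i, Some j}" for k
    using that assms mean by auto
  note product = indep_vars_lebesgue_integral[OF _ indep this] indep_vars_integrable[OF _ indep this]
  show "integrable M (\<lambda>\<omega>. Z \<omega> * R s t (xs i) (xs (Suc i)) \<omega> * R s t (xs j) (xs (Suc j)) \<omega>)"
    using product(2) assms(8) by (simp add: mult.assoc)
  show "expectation (\<lambda>\<omega>. Z \<omega> * R s t (xs i) (xs (Suc i)) \<omega> * R s t (xs j) (xs (Suc j)) \<omega>) = 0"
    using product(1) assms(6,8) mean by (simp add: mult.assoc)
qed

lemma expectation_past_mult_disjoint_rect_incrs:
  assumes "0 \<le> s" "s \<le> t" "c \<le> d" "d \<le> c'" "c' \<le> d'" "Z \<in> borel_measurable (F s)" "integrable M Z"
  shows "integrable M (\<lambda>\<omega>. Z \<omega> * R s t c d \<omega> * R s t c' d' \<omega>)"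
    "expectation (\<lambda>\<omega>. Z \<omega> * R s t c d \<omega> * R s t c' d' \<omega>) = 0"
proof -
  have "integrable M (\<lambda>\<omega>. Z \<omega> * R s t c d \<omega> * R s t c' d' \<omega>) \<and>
      expectation (\<lambda>\<omega>. Z \<omega> * R s t c d \<omega> * R s t c' d' \<omega>) = 0"
  proof (cases "s < t \<and> c < d \<and> c' < d'")
    case True
    show ?thesis
    proof (cases "d = c'")
      case True2: True
      define xs where "xs = (\<lambda>i::nat. if i = 0 then c else if i = 1 then d else d')"
      have "\<forall>i<2. xs i < xs (Suc i)" using True True2 by (auto simp: xs_def less_2_cases_iff)
      from expectation_past_mult_partition_rect_incrs[OF assms(1) _ this assms(6,7), where i=0 and j=1] True True2
      show ?thesis by (simp add: xs_def)
    next
      case False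
      define xs where "xs = (\<lambda>i::nat. if i = 0 then c else if i = 1 then d else if i = 2 then c' else d')"
      have "\<forall>i<3. xs i < xs (Suc i)" using True False assms by (auto simp: xs_def less_Suc_eq)
      from expectation_past_mult_partition_rect_incrs[OF assms(1) _ this assms(6,7), where i=0 and j=2] True
      show ?thesis by (simp add: xs_def)
    qed
  next
    case False
    then have "s = t \<or> c = d \<or> c' = d'" using assms by auto
    then show ?thesis by auto
  qed
  then show "integrable M (\<lambda>\<omega>. Z \<omega> * R s t c d \<omega> * R s t c' d' \<omega>)"
    "expectation (\<lambda>\<omega>. Z \<omega> * R s t c d \<omega> * R s t c' d' \<omega>) = 0" by auto
qed

text \<open>Split both spatial intervals at the endpoints of their overlap: the two copies of the
  overlap contribute its length, every other pair of pieces is disjoint.\<close>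

lemma expectation_past_mult_rect_incrs_ordered:
  assumes "0 \<le> s" "s \<le> t" "c \<le> d" "c' \<le> d'" "c \<le> c'" "Z \<in> borel_measurable (F s)" "integrable M Z"
  shows "integrable M (\<lambda>\<omega>. Z \<omega> * R s t c d \<omega> * R s t c' d' \<omega>) \<and>
    expectation (\<lambda>\<omega>. Z \<omega> * R s t c d \<omega> * R s t c' d' \<omega>) = expectation Z * ((t - s) * overlap c d c' d')"
proof (cases "d \<le> c'")
  case True
  then have "overlap c d c' d' = 0" by (simp add: overlap_def)
  then show ?thesis using expectation_past_mult_disjoint_rect_incrs[OF assms(1-3) True assms(4,6,7)] by simp
next
  case False
  note sq = expectation_past_mult_rect_incr_sq[OF assms(1,2) _ assms(6,7)]
  note disjoint = expectation_past_mult_disjoint_rect_incrs[OF assms(1,2) _ _ _ assms(6,7)]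
  show ?thesis
  proof (cases "d \<le> d'")
    case True
    have split: "(\<lambda>\<omega>. Z \<omega> * R s t c d \<omega> * R s t c' d' \<omega>) = (\<lambda>\<omega>.
      (Z \<omega> * R s t c c' \<omega> * R s t c' d \<omega> + Z \<omega> * R s t c c' \<omega> * R s t d d' \<omega>) +
      (Z \<omega> * (R s t c' d \<omega>)\<^sup>2 + Z \<omega> * R s t c' d \<omega> * R s t d d' \<omega>))"
      by (simp add: fun_eq_iff rect_incr_def power2_eq_square algebra_simps)
    have "overlap c d c' d' = d - c'" using True False assms by (simp add: overlap_def)
    then show ?thesis unfolding split
      using disjoint[of c c' c' d] disjoint[of c c' d d'] disjoint[of c' d d d'] sq[of c' d] assms False True
      by simp
  next
    case False2: False
    have split: "(\<lambda>\<omega>. Z \<omega> * R s t c d \<omega> * R s t c' d' \<omega>) = (\<lambda>\<omega>.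
      (Z \<omega> * R s t c c' \<omega> * R s t c' d' \<omega> + Z \<omega> * (R s t c' d' \<omega>)\<^sup>2) +
      Z \<omega> * R s t c' d' \<omega> * R s t d' d \<omega>)"
      by (simp add: fun_eq_iff rect_incr_def power2_eq_square algebra_simps)
    have "overlap c d c' d' = d' - c'" using False2 False assms by (simp add: overlap_def)
    then show ?thesis unfolding split
      using disjoint[of c c' c' d'] disjoint[of c' d' d' d] sq[of c' d'] assms False2
      by simp
  qed
qed

lemma expectation_past_mult_rect_incrs:
  assumes "0 \<le> s" "s \<le> t" "c \<le> d" "c' \<le> d'" "Z \<in> borel_measurable (F s)" "integrable M Z"
  shows "integrable M (\<lambda>\<omega>. Z \<omega> * R s t c d \<omega> * R s t c' d' \<omega>)"
    "expectation (\<lambda>\<omega>. Z \<omega> * R s t c d \<omega> * R s t c' d' \<omega>) = expectation Z * ((t - s) * overlap c d c' d')"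
proof -
  have "integrable M (\<lambda>\<omega>. Z \<omega> * R s t c d \<omega> * R s t c' d' \<omega>) \<and>
    expectation (\<lambda>\<omega>. Z \<omega> * R s t c d \<omega> * R s t c' d' \<omega>) = expectation Z * ((t - s) * overlap c d c' d')"
  proof (cases "c \<le> c'")
    case True
    then show ?thesis using expectation_past_mult_rect_incrs_ordered assms by blast
  next
    case False
    have "(\<lambda>\<omega>. Z \<omega> * R s t c' d' \<omega> * R s t c d \<omega>) = (\<lambda>\<omega>. Z \<omega> * R s t c d \<omega> * R s t c' d' \<omega>)"
      by (simp add: fun_eq_iff mult_ac)
    then show ?thesis
      using expectation_past_mult_rect_incrs_ordered[OF assms(1,2,4,3) _ assms(5,6)] False
      by (simp add: overlap_commute)
  qed
  then show "integrable M (\<lambda>\<omega>. Z \<omega> * R s t c d \<omega> * R s t c' d' \<omega>)"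
    "expectation (\<lambda>\<omega>. Z \<omega> * R s t c d \<omega> * R s t c' d' \<omega>) = expectation Z * ((t - s) * overlap c d c' d')"
    by auto
qed

lemma expectation_past_mult_successive_rect_incrs:
  assumes "0 \<le> p" "p \<le> q" "q \<le> r" "r \<le> t" "e \<le> f" "e' \<le> f'"
    and "\<eta> \<in> borel_measurable (F r)" "\<forall>\<omega>\<in>space M. \<bar>\<eta> \<omega>\<bar> \<le> B"
  shows "integrable M (\<lambda>\<omega>. \<eta> \<omega> * R p q e f \<omega> * R r t e' f' \<omega>) \<and>
    expectation (\<lambda>\<omega>. \<eta> \<omega> * R p q e f \<omega> * R r t e' f' \<omega>) = 0"
proof -
  have "(\<lambda>\<omega>. \<eta> \<omega> * R p q e f \<omega>) \<in> borel_measurable (F r)"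
    using assms(7) measurable_F_mono[OF assms(3) rect_incr_measurable_F[OF assms(1,2)]]
    by (intro borel_measurable_times)
  moreover have "integrable M (\<lambda>\<omega>. \<eta> \<omega> * R p q e f \<omega>)"
    using integrable_bounded_mult[OF rect_incr_mean(1)[OF assms(1,2,5)]
        measurable_F_imp_measurable[OF assms(7)] assms(8)] .
  ultimately show ?thesis
    using expectation_past_mult_rect_incr[of r t e' f' "\<lambda>\<omega>. \<eta> \<omega> * R p q e f \<omega>"] assms by simp
qed

text \<open>Split the earlier time interval at the start a' of the later one, and the remaining overlap
  at its end: only the common time slab survives, with the spatial covariance computed above.\<close>

lemma expectation_bounded_mult_rect_incrs_ordered:
  assumes "0 \<le> a" "a \<le> b" "c \<le> d" "a \<le> a'" "a' \<le> b'" "c' \<le> d'"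
    and \<eta>: "\<eta> \<in> borel_measurable (F a')" "\<forall>\<omega>\<in>space M. \<bar>\<eta> \<omega>\<bar> \<le> B"
  shows "integrable M (\<lambda>\<omega>. \<eta> \<omega> * R a b c d \<omega> * R a' b' c' d' \<omega>) \<and>
    expectation (\<lambda>\<omega>. \<eta> \<omega> * R a b c d \<omega> * R a' b' c' d' \<omega>) =
      expectation \<eta> * (overlap a b a' b' * overlap c d c' d')"
proof -
  have \<eta>_later: "\<eta> \<in> borel_measurable (F r)" if "a' \<le> r" for r
    using measurable_F_mono[OF that \<eta>(1)] .
  have \<eta>_integrable: "integrable M \<eta>"
    using integrable_bounded[OF measurable_F_imp_measurable[OF \<eta>(1)] \<eta>(2)] .
  note successive = expectation_past_mult_successive_rect_incrs[OF _ _ _ _ _ _ \<eta>_later \<eta>(2)]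
  have same_time: "integrable M (\<lambda>\<omega>. \<eta> \<omega> * R p q c d \<omega> * R p q c' d' \<omega>) \<and>
      expectation (\<lambda>\<omega>. \<eta> \<omega> * R p q c d \<omega> * R p q c' d' \<omega>) = expectation \<eta> * ((q - p) * overlap c d c' d')"
    if "a' \<le> p" "p \<le> q" for p q
    using expectation_past_mult_rect_incrs[OF _ that(2) assms(3,6) \<eta>_later[OF that(1)] \<eta>_integrable]
      that assms by simp
  show ?thesis
  proof (cases "b \<le> a'")
    case True
    then have "overlap a b a' b' = 0" by (simp add: overlap_def)
    then show ?thesis using successive[of a b a' b' c d c' d'] True assms by simp
  next
    case False
    show ?thesis
    proof (cases "b \<le> b'")
      case True
      have split: "(\<lambda>\<omega>. \<eta> \<omega> * R a b c d \<omega> * R a' b' c' d' \<omega>) = (\<lambda>\<omega>.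
        (\<eta> \<omega> * R a a' c d \<omega> * R a' b c' d' \<omega> + \<eta> \<omega> * R a a' c d \<omega> * R b b' c' d' \<omega>) +
        (\<eta> \<omega> * R a' b c d \<omega> * R a' b c' d' \<omega> + \<eta> \<omega> * R a' b c d \<omega> * R b b' c' d' \<omega>))"
        by (simp add: fun_eq_iff rect_incr_def algebra_simps)
      have "overlap a b a' b' = b - a'" using True False assms by (simp add: overlap_def)
      then show ?thesis unfolding split
        using successive[of a a' a' b c d c' d'] successive[of a a' b b' c d c' d']
          successive[of a' b b b' c d c' d'] same_time[of a' b] False True assms
        by (simp add: mult_ac)
    next
      case False2: False
      have split: "(\<lambda>\<omega>. \<eta> \<omega> * R a b c d \<omega> * R a' b' c' d' \<omega>) = (\<lambda>\<omega>.
        (\<eta> \<omega> * R a a' c d \<omega> * R a' b' c' d' \<omega> + \<eta> \<omega> * R a' b' c d \<omega> * R a' b' c' d' \<omega>) +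
        \<eta> \<omega> * R a' b' c' d' \<omega> * R b' b c d \<omega>)"
        by (simp add: fun_eq_iff rect_incr_def algebra_simps)
      have "overlap a b a' b' = b' - a'" using False2 False assms by (simp add: overlap_def)
      then show ?thesis unfolding split
        using successive[of a a' a' b' c d c' d'] successive[of a' b' b' b c' d' c d]
          same_time[of a' b'] False2 assms
        by (simp add: mult_ac)
    qed
  qed
qed

lemma expectation_simple_terms_product:
  assumes "0 \<le> a" "a \<le> b" "c \<le> d" "0 \<le> a'" "a' \<le> b'" "c' \<le> d'"
    and \<xi>: "\<xi> \<in> borel_measurable (F a)" "\<forall>\<omega>\<in>space M. \<bar>\<xi> \<omega>\<bar> \<le> B"
    and \<xi>': "\<xi>' \<in> borel_measurable (F a')" "\<forall>\<omega>\<in>space M. \<bar>\<xi>' \<omega>\<bar> \<le> B'"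
  shows "integrable M (\<lambda>\<omega>. \<xi> \<omega> * \<xi>' \<omega> * R a b c d \<omega> * R a' b' c' d' \<omega>) \<and>
    expectation (\<lambda>\<omega>. \<xi> \<omega> * \<xi>' \<omega> * R a b c d \<omega> * R a' b' c' d' \<omega>) =
      expectation (\<lambda>\<omega>. \<xi> \<omega> * \<xi>' \<omega>) * (overlap a b a' b' * overlap c d c' d')"
proof -
  have bound: "\<forall>\<omega>\<in>space M. \<bar>\<xi> \<omega> * \<xi>' \<omega>\<bar> \<le> B * B'"
    using bounded_mult[OF \<xi>(2) \<xi>'(2)] .
  have product_measurable: "(\<lambda>\<omega>. \<xi> \<omega> * \<xi>' \<omega>) \<in> borel_measurable (F (max a a'))"
    using measurable_F_mono[OF _ \<xi>(1), of "max a a'"] measurable_F_mono[OF _ \<xi>'(1), of "max a a'"]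
    by (intro borel_measurable_times) auto
  show ?thesis
  proof (cases "a \<le> a'")
    case True
    with product_measurable show ?thesis
      using expectation_bounded_mult_rect_incrs_ordered[OF assms(1-3) True assms(5,6) _ bound]
      by (simp add: max_def mult.assoc)
  next
    case False
    have "(\<lambda>\<omega>. \<xi> \<omega> * \<xi>' \<omega> * R a b c d \<omega> * R a' b' c' d' \<omega>)
        = (\<lambda>\<omega>. (\<xi> \<omega> * \<xi>' \<omega>) * R a' b' c' d' \<omega> * R a b c d \<omega>)"
      by (simp add: fun_eq_iff mult_ac)
    with product_measurable show ?thesis
      using expectation_bounded_mult_rect_incrs_ordered[OF assms(4-6) _ assms(2,3) _ bound] False
      by (simp add: max_def overlap_commute mult_ac)
  qed
qed

lemma simple_valid_nth:
  assumes "simple_valid M F L" "k < length L" "L!k = (a, b, c, d, \<xi>)"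
  shows "0 \<le> a" "a \<le> b" "c \<le> d" "\<xi> \<in> borel_measurable (F a)" "\<exists>B. \<forall>\<omega>\<in>space M. \<bar>\<xi> \<omega>\<bar> \<le> B"
  using assms nth_mem[OF assms(2)] unfolding simple_valid_def by fastforce+

lemma simple_valid_Cons: "simple_valid M F (e # L) \<longleftrightarrow> simple_valid M F [e] \<and> simple_valid M F L"
  by (auto simp: simple_valid_def)

lemma simple_eval_measurable:
  assumes "simple_valid M F L"
  shows "(\<lambda>(\<omega>, z). simple_eval L (fst z) (snd z) \<omega>) \<in> borel_measurable (M \<Otimes>\<^sub>M (lborel \<Otimes>\<^sub>M lborel))"
  using assms
proof (induction L)
  case Nil
  then show ?case by (simp add: simple_eval_def)
next
  case (Cons e L)
  obtain a b c d \<xi> where e: "e = (a, b, c, d, \<xi>)" by (cases e) auto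
  have [measurable]: "\<xi> \<in> borel_measurable M"
    using Cons.prems e measurable_F_imp_measurable by (auto simp: simple_valid_def)
  have [measurable]: "(\<lambda>(\<omega>, z). simple_eval L (fst z) (snd z) \<omega>) \<in> borel_measurable (M \<Otimes>\<^sub>M (lborel \<Otimes>\<^sub>M lborel))"
    using Cons.IH Cons.prems simple_valid_Cons by blast
  have split: "(\<lambda>(\<omega>, z). simple_eval (e # L) (fst z) (snd z) \<omega>) =
    (\<lambda>p. \<xi> (fst p) * indicator {a<..b} (fst (snd p)) * indicator {c<..d} (snd (snd p)) +
      (\<lambda>(\<omega>, z). simple_eval L (fst z) (snd z) \<omega>) p)"
    by (simp add: fun_eq_iff e simple_eval_def split_beta)
  show ?case unfolding split by measurable
qed

lemma simple_int_measurable_mean_zero: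
  assumes "simple_valid M F L"
  shows "simple_int W L \<in> borel_measurable M" "integrable M (simple_int W L)"
    "expectation (simple_int W L) = 0"
proof -
  have "simple_int W L \<in> borel_measurable M \<and> integrable M (simple_int W L) \<and> expectation (simple_int W L) = 0"
    using assms
  proof (induction L)
    case Nil
    then show ?case by (simp add: simple_int_def)
  next
    case (Cons e L)
    obtain a b c d \<xi> where e: "e = (a, b, c, d, \<xi>)" by (cases e) auto
    have valid: "\<xi> \<in> borel_measurable (F a)" "0 \<le> a" "a < b" "c < d" "\<exists>B. \<forall>\<omega>\<in>space M. \<bar>\<xi> \<omega>\<bar> \<le> B"
      using Cons.prems e by (auto simp: simple_valid_def)
    have IH: "simple_int W L \<in> borel_measurable M" "integrable M (simple_int W L)"
      "expectation (simple_int W L) = 0"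
      using Cons.IH Cons.prems simple_valid_Cons by blast+
    have split: "simple_int W (e # L) = (\<lambda>\<omega>. \<xi> \<omega> * R a b c d \<omega> + simple_int W L \<omega>)"
      by (simp add: fun_eq_iff e simple_int_def)
    have "integrable M \<xi>"
      using valid(5) integrable_bounded[OF measurable_F_imp_measurable[OF valid(1)]] by blast
    note head = expectation_past_mult_rect_incr[OF valid(2) _ _ valid(1) this, of b c d]
    have "simple_int W (e # L) \<in> borel_measurable M"
      unfolding split using IH measurable_F_imp_measurable[OF valid(1)] rect_incr_measurable[of a b c d] valid
      by (intro borel_measurable_add borel_measurable_times) auto
    then show ?case unfolding split using IH head valid by auto
  qed
  then show "simple_int W L \<in> borel_measurable M" "integrable M (simple_int W L)"
    "expectation (simple_int W L) = 0" by auto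
qed

lemma simple_int_square_expectation:
  assumes "simple_valid M F L"
  shows "integrable M (\<lambda>\<omega>. (simple_int W L \<omega>)\<^sup>2)"
    and "expectation (\<lambda>\<omega>. (simple_int W L \<omega>)\<^sup>2)
      = (\<Sum>k<length L. \<Sum>l<length L. simple_term_covariance M (L!k) (L!l))"
proof -
  define T where "T k \<omega> = (case L!k of (a, b, c, d, \<xi>) \<Rightarrow> \<xi> \<omega> * R a b c d \<omega>)" for k \<omega>
  have product: "integrable M (\<lambda>\<omega>. T k \<omega> * T l \<omega>) \<and>
      expectation (\<lambda>\<omega>. T k \<omega> * T l \<omega>) = simple_term_covariance M (L!k) (L!l)"
    if "k < length L" "l < length L" for k l
  proof -
    obtain a b c d \<xi> where k: "L!k = (a, b, c, d, \<xi>)" by (cases "L!k") auto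
    obtain a' b' c' d' \<xi>' where l: "L!l = (a', b', c', d', \<xi>')" by (cases "L!l") auto
    note vk = simple_valid_nth[OF assms that(1) k] and vl = simple_valid_nth[OF assms that(2) l]
    obtain B B' where "\<forall>\<omega>\<in>space M. \<bar>\<xi> \<omega>\<bar> \<le> B" "\<forall>\<omega>\<in>space M. \<bar>\<xi>' \<omega>\<bar> \<le> B'"
      using vk(5) vl(5) by blast
    from expectation_simple_terms_product[OF vk(1-3) vl(1-3) vk(4) this(1) vl(4) this(2)]
    show ?thesis by (simp add: T_def k l mult_ac)
  qed
  have integrable: "integrable M (\<lambda>\<omega>. T k \<omega> * T l \<omega>)"
    and expectation: "expectation (\<lambda>\<omega>. T k \<omega> * T l \<omega>) = simple_term_covariance M (L!k) (L!l)"
    if "k < length L" "l < length L" for k l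
    using product[OF that] by auto
  have square: "(simple_int W L \<omega>)\<^sup>2 = (\<Sum>k<length L. \<Sum>l<length L. T k \<omega> * T l \<omega>)" for \<omega>
    unfolding simple_int_nth square_sum T_def ..
  show "integrable M (\<lambda>\<omega>. (simple_int W L \<omega>)\<^sup>2)"
    unfolding square using integrable by (intro Bochner_Integration.integrable_sum) auto
  show "expectation (\<lambda>\<omega>. (simple_int W L \<omega>)\<^sup>2)
      = (\<Sum>k<length L. \<Sum>l<length L. simple_term_covariance M (L!k) (L!l))"
  proof -
    have "expectation (\<lambda>\<omega>. \<Sum>k<length L. \<Sum>l<length L. T k \<omega> * T l \<omega>)
        = (\<Sum>k<length L. expectation (\<lambda>\<omega>. \<Sum>l<length L. T k \<omega> * T l \<omega>))"
      using integrable by (intro Bochner_Integration.integral_sum Bochner_Integration.integrable_sum) auto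
    also have "\<dots> = (\<Sum>k<length L. \<Sum>l<length L. simple_term_covariance M (L!k) (L!l))"
      using integrable expectation by (intro sum.cong refl) (subst Bochner_Integration.integral_sum, auto)
    finally show ?thesis unfolding square .
  qed
qed

lemma simple_cell_products:
  assumes "simple_valid M F L" "k < length L" "l < length L"
  shows "integrable (lborel \<Otimes>\<^sub>M lborel) (\<lambda>z. simple_cell L k z * simple_cell L l z)"
    and "integrable M (\<lambda>\<omega>. simple_coeff L k \<omega> * simple_coeff L l \<omega>)"
    and "expectation (\<lambda>\<omega>. simple_coeff L k \<omega> * simple_coeff L l \<omega>)
        * integral\<^sup>L (lborel \<Otimes>\<^sub>M lborel) (\<lambda>z. simple_cell L k z * simple_cell L l z)
      = simple_term_covariance M (L!k) (L!l)"
proof -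
  obtain a b c d \<xi> where k: "L!k = (a, b, c, d, \<xi>)" by (cases "L!k") auto
  obtain a' b' c' d' \<xi>' where l: "L!l = (a', b', c', d', \<xi>')" by (cases "L!l") auto
  note vk = simple_valid_nth[OF assms(1,2) k] and vl = simple_valid_nth[OF assms(1,3) l]
  obtain B B' where bounds: "\<forall>\<omega>\<in>space M. \<bar>\<xi> \<omega>\<bar> \<le> B" "\<forall>\<omega>\<in>space M. \<bar>\<xi>' \<omega>\<bar> \<le> B'"
    using vk(5) vl(5) by blast
  show "integrable (lborel \<Otimes>\<^sub>M lborel) (\<lambda>z. simple_cell L k z * simple_cell L l z)"
    "expectation (\<lambda>\<omega>. simple_coeff L k \<omega> * simple_coeff L l \<omega>)
        * integral\<^sup>L (lborel \<Otimes>\<^sub>M lborel) (\<lambda>z. simple_cell L k z * simple_cell L l z)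
      = simple_term_covariance M (L!k) (L!l)"
    using integral_rectangle_indicators_product[of a b c d a' b' c' d']
    by (simp_all add: simple_cell_def simple_coeff_def k l)
  have "(\<lambda>\<omega>. \<xi> \<omega> * \<xi>' \<omega>) \<in> borel_measurable M"
    using measurable_F_imp_measurable[OF vk(4)] measurable_F_imp_measurable[OF vl(4)]
    by (intro borel_measurable_times)
  with bounded_mult[OF bounds] show "integrable M (\<lambda>\<omega>. simple_coeff L k \<omega> * simple_coeff L l \<omega>)"
    unfolding simple_coeff_def k l by (simp add: integrable_bounded)
qed

lemma simple_eval_square_integral:
  assumes "simple_valid M F L"
  shows "(\<integral>\<^sup>+\<omega>. (\<integral>\<^sup>+z. ennreal ((simple_eval L (fst z) (snd z) \<omega>)\<^sup>2) \<partial>(lborel \<Otimes>\<^sub>M lborel)) \<partial>M)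
       = ennreal (\<Sum>k<length L. \<Sum>l<length L. simple_term_covariance M (L!k) (L!l))"
proof -
  define n where "n = length L"
  define X where "X = simple_coeff L"
  define P where "P = simple_cell L"
  define Q where "Q \<omega> = (\<Sum>k<n. \<Sum>l<n. X k \<omega> * X l \<omega> * integral\<^sup>L (lborel \<Otimes>\<^sub>M lborel) (\<lambda>z. P k z * P l z))" for \<omega>
  note cell = simple_cell_products[OF assms, folded n_def X_def P_def]
  have square: "(simple_eval L (fst z) (snd z) \<omega>)\<^sup>2 = (\<Sum>k<n. \<Sum>l<n. X k \<omega> * X l \<omega> * (P k z * P l z))"
    for z \<omega>
    unfolding simple_eval_nth square_sum n_def X_def P_def by (intro sum.cong refl) (simp add: mult_ac)
  have inner: "(\<integral>\<^sup>+z. ennreal ((simple_eval L (fst z) (snd z) \<omega>)\<^sup>2) \<partial>(lborel \<Otimes>\<^sub>M lborel)) = ennreal (Q \<omega>)"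
    and Q_nonneg: "0 \<le> Q \<omega>" for \<omega>
  proof -
    have integrable: "integrable (lborel \<Otimes>\<^sub>M lborel) (\<lambda>z. (simple_eval L (fst z) (snd z) \<omega>)\<^sup>2)"
      unfolding square using cell(1) by (intro Bochner_Integration.integrable_sum integrable_mult_right) auto
    have integral: "integral\<^sup>L (lborel \<Otimes>\<^sub>M lborel) (\<lambda>z. (simple_eval L (fst z) (snd z) \<omega>)\<^sup>2) = Q \<omega>"
      unfolding square Q_def using cell(1)
      by (subst Bochner_Integration.integral_sum)
        (auto intro!: sum.cong Bochner_Integration.integrable_sum simp: Bochner_Integration.integral_sum)
    show "(\<integral>\<^sup>+z. ennreal ((simple_eval L (fst z) (snd z) \<omega>)\<^sup>2) \<partial>(lborel \<Otimes>\<^sub>M lborel)) = ennreal (Q \<omega>)"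
      using integrable integral by (simp add: nn_integral_eq_integral)
    show "0 \<le> Q \<omega>"
      unfolding integral[symmetric] by simp
  qed
  have "integrable M Q"
    unfolding Q_def using cell(2) by (intro Bochner_Integration.integrable_sum integrable_mult_left) auto
  moreover have "expectation Q = (\<Sum>k<n. \<Sum>l<n. simple_term_covariance M (L!k) (L!l))"
    unfolding Q_def using cell(2,3)
    by (subst Bochner_Integration.integral_sum)
      (auto intro!: sum.cong Bochner_Integration.integrable_sum simp: Bochner_Integration.integral_sum)
  ultimately show ?thesis
    using nn_integral_eq_integral[of M Q] Q_nonneg by (simp add: inner n_def)
qed

lemma simple_walsh_isometry:
  assumes "simple_valid M F L"
  shows "(\<integral>\<^sup>+\<omega>. (\<integral>\<^sup>+z. ennreal ((simple_eval L (fst z) (snd z) \<omega>)\<^sup>2) \<partial>(lborel \<Otimes>\<^sub>M lborel)) \<partial>M)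
       = (\<integral>\<^sup>+\<omega>. ennreal ((simple_int W L \<omega>)\<^sup>2) \<partial>M)"
  using simple_eval_square_integral[OF assms] simple_int_square_expectation[OF assms]
  by (simp add: nn_integral_eq_integral)

lemma walsh_integral_square_integrable:
  assumes "has_walsh_integral M F W f J"
  shows "J \<in> borel_measurable M" "integrable M (\<lambda>\<omega>. (J \<omega>)\<^sup>2)" "integrable M J"
proof -
  obtain Ls where J: "J \<in> borel_measurable M" and valid: "\<And>n. simple_valid M F (Ls n)"
    and approx: "(\<lambda>n. \<integral>\<^sup>+ \<omega>. ennreal ((J \<omega> - simple_int W (Ls n) \<omega>)\<^sup>2) \<partial>M) \<longlonglongrightarrow> 0"
    using assms unfolding has_walsh_integral_def by blast
  obtain N where close: "(\<integral>\<^sup>+ \<omega>. ennreal ((J \<omega> - simple_int W (Ls N) \<omega>)\<^sup>2) \<partial>M) < 1"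
    using order_tendstoD(2)[OF approx, of 1] by (auto simp: eventually_sequentially)
  define S where "S = simple_int W (Ls N)"
  have S: "S \<in> borel_measurable M" "integrable M (\<lambda>\<omega>. (S \<omega>)\<^sup>2)"
    unfolding S_def using simple_int_measurable_mean_zero(1) simple_int_square_expectation(1) valid by auto
  have "(\<integral>\<^sup>+\<omega>. ennreal ((J \<omega>)\<^sup>2) \<partial>M)
      \<le> ennreal (1 + 1) * (\<integral>\<^sup>+\<omega>. ennreal ((S \<omega>)\<^sup>2) \<partial>M) + ennreal (1 + 1/1) * (\<integral>\<^sup>+\<omega>. ennreal ((J \<omega> - S \<omega>)\<^sup>2) \<partial>M)"
    by (rule nn_integral_square_le_peter_paul[OF J S(1)]) simp
  also have "\<dots> < \<infinity>"
  proof -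
    have "(\<integral>\<^sup>+\<omega>. ennreal ((S \<omega>)\<^sup>2) \<partial>M) < \<infinity>"
      using nn_integral_eq_integral[OF S(2)] by simp
    moreover have "(\<integral>\<^sup>+\<omega>. ennreal ((J \<omega> - S \<omega>)\<^sup>2) \<partial>M) < \<infinity>"
      using close unfolding S_def by (rule order.strict_trans) simp
    ultimately show ?thesis by (simp add: ennreal_mult_less_top)
  qed
  finally have "(\<integral>\<^sup>+\<omega>. ennreal (norm ((J \<omega>)\<^sup>2)) \<partial>M) < \<infinity>" by simp
  moreover have "(\<lambda>\<omega>. (J \<omega>)\<^sup>2) \<in> borel_measurable M" using J by measurable
  ultimately show square_integrable: "integrable M (\<lambda>\<omega>. (J \<omega>)\<^sup>2)"
    by (intro integrableI_bounded)
  show "integrable M J"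
    using square_integrable_imp_integrable[OF J square_integrable] .
  show "J \<in> borel_measurable M" by (rule J)
qed

lemma walsh_integral_mean_zero:
  assumes "has_walsh_integral M F W f J"
  shows "expectation J = 0"
proof -
  obtain Ls where valid: "\<And>n. simple_valid M F (Ls n)"
    and approx: "(\<lambda>n. \<integral>\<^sup>+ \<omega>. ennreal ((J \<omega> - simple_int W (Ls n) \<omega>)\<^sup>2) \<partial>M) \<longlonglongrightarrow> 0"
    using assms unfolding has_walsh_integral_def by blast
  note J = walsh_integral_square_integrable[OF assms]
  have "ennreal ((expectation J)\<^sup>2) \<le> (\<integral>\<^sup>+ \<omega>. ennreal ((J \<omega> - simple_int W (Ls n) \<omega>)\<^sup>2) \<partial>M)" for n
  proof -
    define D where "D = (\<lambda>\<omega>. J \<omega> - simple_int W (Ls n) \<omega>)"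
    note S = simple_int_measurable_mean_zero[OF valid] simple_int_square_expectation(1)[OF valid]
    have D: "integrable M D" "integrable M (\<lambda>\<omega>. (D \<omega>)\<^sup>2)"
      using J S integrable_square_add[of J M "\<lambda>\<omega>. - simple_int W (Ls n) \<omega>"] by (auto simp: D_def)
    have "(expectation J)\<^sup>2 = (expectation D)\<^sup>2"
      using J S by (simp add: D_def)
    also have "\<dots> \<le> expectation (\<lambda>\<omega>. (D \<omega>)\<^sup>2)"
      using variance_eq[OF D] variance_positive[of D] by simp
    finally show ?thesis
      using D(2) by (simp add: D_def nn_integral_eq_integral ennreal_leI)
  qed
  then have "ennreal ((expectation J)\<^sup>2) \<le> 0"
    by (intro LIMSEQ_le_const[OF approx]) auto
  then show ?thesis by simp
qed

text \<open>The definition only provides L2 approximation, so the isometry is recovered as an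
  inequality: compare f with the approximants and these with J, losing a factor (1 + \<epsilon>)
  at each of the two comparisons.\<close>

lemma walsh_integral_isometry_le:
  assumes "has_walsh_integral M F W f J"
    and f_measurable: "(\<lambda>(\<omega>, z). f (fst z) (snd z) \<omega>) \<in> borel_measurable (M \<Otimes>\<^sub>M (lborel \<Otimes>\<^sub>M lborel))"
  shows "(\<integral>\<^sup>+\<omega>. \<integral>\<^sup>+z. ennreal ((f (fst z) (snd z) \<omega>)\<^sup>2) \<partial>(lborel \<Otimes>\<^sub>M lborel) \<partial>M)
    \<le> (\<integral>\<^sup>+\<omega>. ennreal ((J \<omega>)\<^sup>2) \<partial>M)"
proof (rule ennreal_le_of_forall_le_scaled)
  fix \<epsilon> :: real assume \<epsilon>: "0 < \<epsilon>"
  obtain Ls where J: "J \<in> borel_measurable M" and valid: "\<And>n. simple_valid M F (Ls n)"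
    and field_approx: "(\<lambda>n. field_dist2 M f (simple_eval (Ls n))) \<longlonglongrightarrow> 0"
    and approx: "(\<lambda>n. \<integral>\<^sup>+ \<omega>. ennreal ((J \<omega> - simple_int W (Ls n) \<omega>)\<^sup>2) \<partial>M) \<longlonglongrightarrow> 0"
    using assms(1) unfolding has_walsh_integral_def by blast
  define c1 where "c1 = ennreal (1 + \<epsilon>)"
  define c2 where "c2 = ennreal (1 + 1/\<epsilon>)"
  define IJ where "IJ = (\<integral>\<^sup>+\<omega>. ennreal ((J \<omega>)\<^sup>2) \<partial>M)"
  define e where "e n = (\<integral>\<^sup>+ \<omega>. ennreal ((J \<omega> - simple_int W (Ls n) \<omega>)\<^sup>2) \<partial>M)" for n
  define d where "d n = field_dist2 M f (simple_eval (Ls n))" for n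
  define LHS where "LHS = (\<integral>\<^sup>+\<omega>. \<integral>\<^sup>+z. ennreal ((f (fst z) (snd z) \<omega>)\<^sup>2) \<partial>(lborel \<Otimes>\<^sub>M lborel) \<partial>M)"
  have bound: "LHS \<le> c1 * (c1 * IJ + c2 * e n) + c2 * d n" for n
  proof -
    define S where "S = simple_int W (Ls n)"
    have "LHS \<le> c1 * (\<integral>\<^sup>+\<omega>. \<integral>\<^sup>+z. ennreal ((simple_eval (Ls n) (fst z) (snd z) \<omega>)\<^sup>2) \<partial>(lborel \<Otimes>\<^sub>M lborel) \<partial>M)
        + c2 * d n"
      using nn_integral_iterated_square_le_peter_paul[OF _ f_measurable simple_eval_measurable[OF valid] \<epsilon>]
      by (simp add: LHS_def c1_def c2_def d_def field_dist2_def lborel_pair.P.sigma_finite_measure_axioms)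
    also have "(\<integral>\<^sup>+\<omega>. \<integral>\<^sup>+z. ennreal ((simple_eval (Ls n) (fst z) (snd z) \<omega>)\<^sup>2) \<partial>(lborel \<Otimes>\<^sub>M lborel) \<partial>M)
        = (\<integral>\<^sup>+\<omega>. ennreal ((S \<omega>)\<^sup>2) \<partial>M)"
      unfolding S_def by (rule simple_walsh_isometry[OF valid])
    also have "\<dots> \<le> c1 * IJ + c2 * e n"
      using nn_integral_square_le_peter_paul[OF simple_int_measurable_mean_zero(1)[OF valid] J \<epsilon>]
      by (simp add: S_def IJ_def e_def c1_def c2_def power2_commute)
    finally show ?thesis by (simp add: mult_left_mono add_right_mono)
  qed
  have "(\<lambda>n. c1 * (c1 * IJ + c2 * e n) + c2 * d n) \<longlonglongrightarrow> c1 * (c1 * IJ + c2 * 0) + c2 * 0"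
    using field_approx approx unfolding d_def[symmetric] e_def[symmetric]
    by (intro tendsto_add ennreal_tendsto_cmult tendsto_const) (auto simp: c1_def c2_def)
  then have "LHS \<le> c1 * (c1 * IJ)"
    using bound by (intro LIMSEQ_le_const) auto
  also have "c1 * (c1 * IJ) = ennreal ((1 + \<epsilon>)\<^sup>2) * IJ"
    using \<epsilon> by (simp add: c1_def power2_eq_square ennreal_mult mult.assoc)
  finally show "(\<integral>\<^sup>+\<omega>. \<integral>\<^sup>+z. ennreal ((f (fst z) (snd z) \<omega>)\<^sup>2) \<partial>(lborel \<Otimes>\<^sub>M lborel) \<partial>M)
      \<le> ennreal ((1 + \<epsilon>)\<^sup>2) * (\<integral>\<^sup>+\<omega>. ennreal ((J \<omega>)\<^sup>2) \<partial>M)"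
    unfolding LHS_def IJ_def .
qed

end

section \<open>A renewal inequality beyond a moving front\<close>

definition cone_integral :: "real \<Rightarrow> (real \<times> real \<Rightarrow> ennreal) \<Rightarrow> real \<Rightarrow> real \<Rightarrow> ennreal" where
  "cone_integral \<kappa> m t x = (\<integral>\<^sup>+s. \<integral>\<^sup>+y. indicator {0..t} s * indicator {0..} (y - x + \<kappa> * (t - s)) *
      indicator {0..} (x + \<kappa> * (t - s) - y) * m (s, y) \<partial>lborel \<partial>lborel)"

definition front_mass :: "real \<Rightarrow> (real \<times> real \<Rightarrow> ennreal) \<Rightarrow> real \<Rightarrow> ennreal" where
  "front_mass \<alpha> m t = (\<integral>\<^sup>+x. indicator {0..} (x - \<alpha> * t) * m (t, x) \<partial>lborel)"

definition nn_laplace :: "real \<Rightarrow> (real \<Rightarrow> ennreal) \<Rightarrow> ennreal" where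
  "nn_laplace \<beta> B = (\<integral>\<^sup>+t. indicator {0..} t * ennreal (exp (- \<beta> * t)) * B t \<partial>lborel)"

lemma front_mass_measurable [measurable]:
  assumes [measurable]: "m \<in> borel_measurable (lborel \<Otimes>\<^sub>M lborel)"
  shows "front_mass \<alpha> m \<in> borel_measurable lborel"
  unfolding front_mass_def[abs_def] by measurable

lemma convolution_measurable [measurable]:
  fixes B :: "real \<Rightarrow> ennreal"
  assumes [measurable]: "B \<in> borel_measurable lborel"
  shows "(\<lambda>t. \<integral>\<^sup>+s. indicator {0..t} s * ennreal (c * (t - s)) * B s \<partial>lborel) \<in> borel_measurable lborel"
proof -
  have "(\<lambda>(t, s). indicator {0..t} s * ennreal (c * (t - s)) * B s)
      = (\<lambda>p. indicator {0..} (snd p) * indicator {0..} (fst p - snd p) * ennreal (c * (fst p - snd p)) * B (snd p))"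
    by (auto simp: fun_eq_iff indicator_def)
  also have "\<dots> \<in> borel_measurable (lborel \<Otimes>\<^sub>M lborel)" by measurable
  finally show ?thesis
    using lborel.borel_measurable_nn_integral_fst[of "\<lambda>(t, s). indicator {0..t} s * ennreal (c * (t - s)) * B s"]
    by simp
qed

lemma light_cone_section_length:
  fixes \<kappa> \<alpha> t s y :: real
  assumes "0 < \<alpha>" "\<alpha> < \<kappa>" "0 \<le> s" "s \<le> t" "0 \<le> y - \<alpha> * s"
  shows "ennreal ((\<kappa> - \<alpha>) * (t - s)) \<le> (\<integral>\<^sup>+x. indicator {0..} (x - \<alpha> * t) *
     (indicator {0..} (y - x + \<kappa> * (t - s)) * indicator {0..} (x + \<kappa> * (t - s) - y)) \<partial>lborel)"
proof -
  have "0 \<le> (\<kappa> - \<alpha>) * (t - s)" using assms by simp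
  then have "ennreal ((\<kappa> - \<alpha>) * (t - s)) = emeasure lborel {y + \<alpha> * (t - s) .. y + \<kappa> * (t - s)}"
    by (subst emeasure_lborel_Icc) (auto simp: algebra_simps)
  also have "\<dots> = (\<integral>\<^sup>+x. indicator {y + \<alpha> * (t - s) .. y + \<kappa> * (t - s)} x \<partial>lborel)"
    by simp
  also have "\<dots> \<le> (\<integral>\<^sup>+x. indicator {0..} (x - \<alpha> * t) *
     (indicator {0..} (y - x + \<kappa> * (t - s)) * indicator {0..} (x + \<kappa> * (t - s) - y)) \<partial>lborel)"
  proof (rule nn_integral_mono)
    fix x
    show "indicator {y + \<alpha> * (t - s) .. y + \<kappa> * (t - s)} x \<le> (indicator {0..} (x - \<alpha> * t) *
     (indicator {0..} (y - x + \<kappa> * (t - s)) * indicator {0..} (x + \<kappa> * (t - s) - y)) :: ennreal)"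
    proof (cases "x \<in> {y + \<alpha> * (t - s) .. y + \<kappa> * (t - s)}")
      case True
      then have x: "y + \<alpha> * (t - s) \<le> x" "x \<le> y + \<kappa> * (t - s)" by auto
      have "0 \<le> \<alpha> * (t - s)" "0 \<le> \<kappa> * (t - s)" using assms by simp_all
      moreover have "\<alpha> * (t - s) \<le> \<kappa> * (t - s)" using assms by (intro mult_right_mono) auto
      moreover have "\<alpha> * (t - s) = \<alpha> * t - \<alpha> * s" by (simp add: right_diff_distrib)
      ultimately have "0 \<le> x - \<alpha> * t" "0 \<le> y - x + \<kappa> * (t - s)" "0 \<le> x + \<kappa> * (t - s) - y"
        using x assms by linarith+
      then show ?thesis using True by (simp add: indicator_def)
    qed simp
  qed
  finally show ?thesis .
qed

lemma front_mass_convolution_le: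
  fixes m :: "real \<times> real \<Rightarrow> ennreal"
  assumes [measurable]: "m \<in> borel_measurable (lborel \<Otimes>\<^sub>M lborel)"
    and \<alpha>: "0 < \<alpha>" "\<alpha> < \<kappa>"
    and cone: "\<And>x. ennreal a * cone_integral \<kappa> m t x \<le> m (t, x)"
  shows "ennreal a * (\<integral>\<^sup>+s. indicator {0..t} s * ennreal ((\<kappa> - \<alpha>) * (t - s)) * front_mass \<alpha> m s \<partial>lborel)
    \<le> front_mass \<alpha> m t"
proof -
  define G where "G x s y = indicator {0..} (x - \<alpha> * t) * (indicator {0..t} s * indicator {0..} (y - x + \<kappa> * (t - s)) *
      indicator {0..} (x + \<kappa> * (t - s) - y) * m (s, y))" for x s y
  have G_measurable: "(\<lambda>p. G (fst (fst p)) (snd (fst p)) (snd p)) \<in> borel_measurable ((lborel \<Otimes>\<^sub>M lborel) \<Otimes>\<^sub>M lborel)"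
    unfolding G_def by measurable
  have G_outer_measurable: "(\<lambda>x. \<integral>\<^sup>+s. \<integral>\<^sup>+y. G x s y \<partial>lborel \<partial>lborel) \<in> borel_measurable lborel"
    using lborel.borel_measurable_nn_integral_fst[OF lborel.borel_measurable_nn_integral_fst[OF G_measurable]]
    by simp
  have "(\<integral>\<^sup>+s. indicator {0..t} s * ennreal ((\<kappa> - \<alpha>) * (t - s)) * front_mass \<alpha> m s \<partial>lborel)
      = (\<integral>\<^sup>+s. \<integral>\<^sup>+y. indicator {0..t} s * ennreal ((\<kappa> - \<alpha>) * (t - s)) * (indicator {0..} (y - \<alpha> * s) * m (s, y))
          \<partial>lborel \<partial>lborel)"
    unfolding front_mass_def by (intro nn_integral_cong nn_integral_cmult[symmetric]) measurable
  also have "\<dots> \<le> (\<integral>\<^sup>+s. \<integral>\<^sup>+y. \<integral>\<^sup>+x. G x s y \<partial>lborel \<partial>lborel \<partial>lborel)"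
  proof (intro nn_integral_mono)
    fix s y
    have "(\<integral>\<^sup>+x. G x s y \<partial>lborel) = indicator {0..t} s * m (s, y) * (\<integral>\<^sup>+x. indicator {0..} (x - \<alpha> * t) *
        (indicator {0..} (y - x + \<kappa> * (t - s)) * indicator {0..} (x + \<kappa> * (t - s) - y)) \<partial>lborel)"
      unfolding G_def by (subst nn_integral_cmult[symmetric]) (measurable, simp add: mult_ac)
    then show "indicator {0..t} s * ennreal ((\<kappa> - \<alpha>) * (t - s)) * (indicator {0..} (y - \<alpha> * s) * m (s, y))
        \<le> (\<integral>\<^sup>+x. G x s y \<partial>lborel)"
      using light_cone_section_length[OF \<alpha>, of s t y]
      by (cases "s \<in> {0..t} \<and> 0 \<le> y - \<alpha> * s") (auto simp: indicator_def mult_ac mult_left_mono)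
  qed
  also have "\<dots> = (\<integral>\<^sup>+x. \<integral>\<^sup>+s. \<integral>\<^sup>+y. G x s y \<partial>lborel \<partial>lborel \<partial>lborel)"
    by (rule nn_integral_lborel_rotate3[OF G_measurable, symmetric])
  finally have "ennreal a * (\<integral>\<^sup>+s. indicator {0..t} s * ennreal ((\<kappa> - \<alpha>) * (t - s)) * front_mass \<alpha> m s \<partial>lborel)
      \<le> (\<integral>\<^sup>+x. ennreal a * (\<integral>\<^sup>+s. \<integral>\<^sup>+y. G x s y \<partial>lborel \<partial>lborel) \<partial>lborel)"
    by (simp add: nn_integral_cmult[OF G_outer_measurable] mult_left_mono)
  also have "\<dots> = (\<integral>\<^sup>+x. indicator {0..} (x - \<alpha> * t) * (ennreal a * cone_integral \<kappa> m t x) \<partial>lborel)"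
    unfolding cone_integral_def G_def
    by (intro nn_integral_cong, (subst nn_integral_cmult[symmetric], measurable)+) (simp add: mult_ac)
  also have "\<dots> \<le> front_mass \<alpha> m t"
    unfolding front_mass_def by (intro nn_integral_mono mult_left_mono cone) simp
  finally show ?thesis .
qed

lemma nn_laplace_convolution:
  fixes B :: "real \<Rightarrow> ennreal"
  assumes [measurable]: "B \<in> borel_measurable lborel" and "0 < \<beta>" "0 \<le> c"
  shows "nn_laplace \<beta> (\<lambda>t. \<integral>\<^sup>+s. indicator {0..t} s * ennreal (c * (t - s)) * B s \<partial>lborel)
    = ennreal (c / \<beta>\<^sup>2) * nn_laplace \<beta> B"
proof -
  define P where
    "P t s = indicator {0..} t * ennreal (exp (- \<beta> * t)) * (indicator {0..t} s * ennreal (c * (t - s)) * B s)"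
    for t s
  have P_eq: "P t s = indicator {0..} t * ennreal (exp (- \<beta> * t)) * (indicator {0..} s * indicator {0..} (t - s) *
      ennreal (c * (t - s)) * B s)" for t s
    by (auto simp: P_def indicator_def)
  have P_measurable: "(\<lambda>(t, s). P t s) \<in> borel_measurable (lborel \<Otimes>\<^sub>M lborel)"
    unfolding P_eq split_beta' by measurable
  have "nn_laplace \<beta> (\<lambda>t. \<integral>\<^sup>+s. indicator {0..t} s * ennreal (c * (t - s)) * B s \<partial>lborel)
      = (\<integral>\<^sup>+t. \<integral>\<^sup>+s. P t s \<partial>lborel \<partial>lborel)"
    unfolding nn_laplace_def P_def by (intro nn_integral_cong nn_integral_cmult[symmetric]) measurable
  also have "\<dots> = (\<integral>\<^sup>+s. \<integral>\<^sup>+t. P t s \<partial>lborel \<partial>lborel)"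
    using P_measurable by (rule lborel_pair.Fubini'[symmetric])
  also have "\<dots> = (\<integral>\<^sup>+s. ennreal (c / \<beta>\<^sup>2) * (indicator {0..} s * ennreal (exp (- \<beta> * s)) * B s) \<partial>lborel)"
  proof (rule nn_integral_cong)
    fix s
    have "(\<integral>\<^sup>+t. P t s \<partial>lborel)
        = (\<integral>\<^sup>+t. (indicator {0..} s * B s * ennreal c) *
            (indicator {s..} t * ennreal (exp (- \<beta> * t) * (t - s))) \<partial>lborel)"
      using assms(3) by (intro nn_integral_cong) (auto simp: P_def indicator_def ennreal_mult mult_ac)
    also have "\<dots> = indicator {0..} s * B s * ennreal c * ennreal (exp (- \<beta> * s) / \<beta>\<^sup>2)"
    proof -
      have "(\<lambda>t. indicator {s..} t * ennreal (exp (- \<beta> * t) * (t - s))) \<in> borel_measurable lborel"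
        by measurable
      then show ?thesis by (simp only: nn_integral_cmult nn_integral_shifted_mult_exp[OF assms(2)])
    qed
    also have "\<dots> = indicator {0..} s * B s * (ennreal (c / \<beta>\<^sup>2) * ennreal (exp (- \<beta> * s)))"
      using assms(3) by (simp add: ennreal_mult[symmetric] mult.assoc)
    also have "\<dots> = ennreal (c / \<beta>\<^sup>2) * (indicator {0..} s * ennreal (exp (- \<beta> * s)) * B s)"
      by (simp only: ac_simps)
    finally show "(\<integral>\<^sup>+t. P t s \<partial>lborel) = ennreal (c / \<beta>\<^sup>2) * (indicator {0..} s * ennreal (exp (- \<beta> * s)) * B s)" .
  qed
  also have "\<dots> = ennreal (c / \<beta>\<^sup>2) * nn_laplace \<beta> B"
    unfolding nn_laplace_def by (rule nn_integral_cmult) measurable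
  finally show ?thesis .
qed

lemma nn_laplace_front_mass_eq_infinity:
  fixes m :: "real \<times> real \<Rightarrow> ennreal"
  assumes [measurable]: "m \<in> borel_measurable (lborel \<Otimes>\<^sub>M lborel)"
    and \<alpha>: "0 < \<alpha>" "\<alpha> < \<kappa>" and \<beta>: "0 < \<beta>" and growth: "\<beta>\<^sup>2 < a * (\<kappa> - \<alpha>)"
    and cone: "\<And>t x. 0 \<le> t \<Longrightarrow> ennreal a * cone_integral \<kappa> m t x \<le> m (t, x)"
    and nonzero: "nn_laplace \<beta> (front_mass \<alpha> m) \<noteq> 0"
  shows "nn_laplace \<beta> (front_mass \<alpha> m) = \<infinity>"
proof (rule ccontr)
  define H where "H = nn_laplace \<beta> (front_mass \<alpha> m)"
  assume "nn_laplace \<beta> (front_mass \<alpha> m) \<noteq> \<infinity>"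
  then have finite: "H \<noteq> \<infinity>" by (simp add: H_def)
  have "0 < a * (\<kappa> - \<alpha>)" using growth \<beta> by (smt (verit) zero_less_power2)
  then have a: "0 < a" using \<alpha> by (simp add: zero_less_mult_iff)
  have convolution: "nn_laplace \<beta>
      (\<lambda>t. \<integral>\<^sup>+s. indicator {0..t} s * ennreal ((\<kappa> - \<alpha>) * (t - s)) * front_mass \<alpha> m s \<partial>lborel)
      = ennreal ((\<kappa> - \<alpha>) / \<beta>\<^sup>2) * H"
    unfolding H_def by (rule nn_laplace_convolution) (use \<alpha> \<beta> in auto)
  have "ennreal (a * ((\<kappa> - \<alpha>) / \<beta>\<^sup>2)) * H = ennreal a * (ennreal ((\<kappa> - \<alpha>) / \<beta>\<^sup>2) * H)"
    using a \<alpha> by (subst ennreal_mult) (simp_all add: mult.assoc)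
  also have "\<dots> = ennreal a * nn_laplace \<beta>
      (\<lambda>t. \<integral>\<^sup>+s. indicator {0..t} s * ennreal ((\<kappa> - \<alpha>) * (t - s)) * front_mass \<alpha> m s \<partial>lborel)"
    unfolding convolution ..
  also have "\<dots> = nn_laplace \<beta> (\<lambda>t. ennreal a *
      (\<integral>\<^sup>+s. indicator {0..t} s * ennreal ((\<kappa> - \<alpha>) * (t - s)) * front_mass \<alpha> m s \<partial>lborel))"
    unfolding nn_laplace_def by (subst nn_integral_cmult[symmetric]) (measurable, simp add: mult_ac)
  also have "\<dots> \<le> H"
    unfolding H_def nn_laplace_def
  proof (rule nn_integral_mono)
    fix t :: real
    have "ennreal a * (\<integral>\<^sup>+s. indicator {0..t} s * ennreal ((\<kappa> - \<alpha>) * (t - s)) * front_mass \<alpha> m s \<partial>lborel)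
        \<le> front_mass \<alpha> m t" if "0 \<le> t"
      using front_mass_convolution_le[OF _ \<alpha> cone[OF that]] by simp
    then show "indicator {0..} t * ennreal (exp (- \<beta> * t)) *
        (ennreal a * (\<integral>\<^sup>+s. indicator {0..t} s * ennreal ((\<kappa> - \<alpha>) * (t - s)) * front_mass \<alpha> m s \<partial>lborel))
      \<le> indicator {0..} t * ennreal (exp (- \<beta> * t)) * front_mass \<alpha> m t"
      by (cases "0 \<le> t") (auto intro: mult_left_mono)
  qed
  finally have "H * ennreal (a * ((\<kappa> - \<alpha>) / \<beta>\<^sup>2)) \<le> H * 1"
    by (simp add: mult.commute)
  moreover have "H \<noteq> 0" using nonzero by (simp add: H_def)
  ultimately have "ennreal (a * ((\<kappa> - \<alpha>) / \<beta>\<^sup>2)) \<le> 1"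
    using ennreal_mult_le_mult_iff[of H "ennreal (a * ((\<kappa> - \<alpha>) / \<beta>\<^sup>2))" 1] finite by simp
  then have "a * (\<kappa> - \<alpha>) \<le> \<beta>\<^sup>2"
    using \<beta> by (simp add: field_simps)
  with growth show False by simp
qed

section \<open>Second moment of the mild solution\<close>

context brownian_sheet_space
begin

lemma predictable_field_measurable:
  assumes "predictable_field M F u"
  shows "(\<lambda>p. if 0 \<le> fst (fst p) then u (fst (fst p)) (snd (fst p)) (snd p) else 0)
     \<in> borel_measurable ((lborel \<Otimes>\<^sub>M lborel) \<Otimes>\<^sub>M M)"
proof -
  define P :: "((real \<times> real) \<times> 'a) measure" where "P = (lborel \<Otimes>\<^sub>M lborel) \<Otimes>\<^sub>M M"
  define \<Omega>r where "\<Omega>r = {p :: (real \<times> real) \<times> 'a. 0 \<le> fst (fst p)}"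
  define \<phi> where "\<phi> p = (fst (fst p), snd (fst p), snd p)" for p :: "(real \<times> real) \<times> 'a"
  define \<Omega> where "\<Omega> = {0::real..} \<times> (UNIV :: real set) \<times> space M"
  define Gen :: "(real \<times> real \<times> 'a) set set" where
    "Gen = ({{a<..b} \<times> A \<times> G | a b A G. 0 \<le> a \<and> a \<le> b \<and> A \<in> sets borel \<and> G \<in> sets (F a)} \<union>
      {{0} \<times> A \<times> G | A G. A \<in> sets borel \<and> G \<in> sets (F 0)})"
  have predictable: "predictable_sigma M F = measure_of \<Omega> Gen (\<lambda>_. 0)"
    unfolding predictable_sigma_def \<Omega>_def Gen_def ..
  have \<Omega>r_sets: "\<Omega>r \<inter> space P \<in> sets P"
  proof -
    have "\<Omega>r \<inter> space P = {p \<in> space P. 0 \<le> fst (fst p)}" by (auto simp: \<Omega>r_def)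
    also have "\<dots> \<in> sets P" unfolding P_def by measurable
    finally show ?thesis .
  qed
  have space_P: "space P = UNIV \<times> space M" by (simp add: P_def space_pair_measure)
  have F_space: "G \<in> sets (F a) \<Longrightarrow> G \<subseteq> space M" for G a
    using sets.sets_into_space[of G "F a"] by (simp add: space_F)
  have F_sets: "G \<in> sets (F a) \<Longrightarrow> G \<in> sets M" for G a using sets_F_subset by blast
  have rectangle: "\<phi> -` (I \<times> A \<times> G) \<inter> space (restrict_space P \<Omega>r) \<in> sets (restrict_space P \<Omega>r)"
    if "I \<in> sets borel" "I \<subseteq> {0..}" "A \<in> sets borel" "G \<in> sets (F a)" for I A G a
  proof -
    have "\<phi> -` (I \<times> A \<times> G) \<inter> space (restrict_space P \<Omega>r) = (I \<times> A) \<times> G"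
      using that F_space[OF that(4)] by (auto simp: space_restrict_space space_P \<phi>_def \<Omega>r_def)
    moreover have "(I \<times> A) \<times> G \<in> sets P" unfolding P_def using that F_sets by (intro pair_measureI) auto
    moreover have "(I \<times> A) \<times> G \<subseteq> \<Omega>r" using that by (auto simp: \<Omega>r_def)
    ultimately show ?thesis using sets_restrict_space_iff[OF \<Omega>r_sets] by auto
  qed
  have "\<phi> \<in> restrict_space P \<Omega>r \<rightarrow>\<^sub>M measure_of \<Omega> Gen (\<lambda>_. 0)"
  proof (rule measurable_measure_of)
    show "Gen \<subseteq> Pow \<Omega>"
      unfolding Gen_def \<Omega>_def using F_space by fastforce
    show "\<phi> \<in> space (restrict_space P \<Omega>r) \<rightarrow> \<Omega>"
      by (auto simp: space_restrict_space space_P \<Omega>_def \<phi>_def \<Omega>r_def)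
    fix Y assume "Y \<in> Gen"
    then show "\<phi> -` Y \<inter> space (restrict_space P \<Omega>r) \<in> sets (restrict_space P \<Omega>r)"
      unfolding Gen_def by (auto intro!: rectangle)
  qed
  then have "(\<lambda>(t, x, \<omega>). u t x \<omega>) \<circ> \<phi> \<in> borel_measurable (restrict_space P \<Omega>r)"
    using assms unfolding predictable predictable_field_def by (rule measurable_comp)
  then have "(\<lambda>p. u (fst (fst p)) (snd (fst p)) (snd p)) \<in> borel_measurable (restrict_space P \<Omega>r)"
    by (simp add: \<phi>_def comp_def)
  then show ?thesis
    using measurable_restrict_space_iff[OF \<Omega>r_sets, of 0 borel "\<lambda>p. u (fst (fst p)) (snd (fst p)) (snd p)"]
    by (simp add: P_def \<Omega>r_def)
qed

end

lemma wave_Gamma_eq_indicators: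
  "wave_Gamma \<kappa> (t - s) (y - x)
    = 1/2 * (indicator {0..} (y - x + \<kappa> * (t - s)) * indicator {0..} (x + \<kappa> * (t - s) - y))"
  by (auto simp: wave_Gamma_def indicator_def)

lemma L_sigma_sq_le:
  assumes "L_sigma \<sigma> > 0" "\<sigma> 0 = 0"
  shows "(L_sigma \<sigma>)\<^sup>2 * x\<^sup>2 \<le> (\<sigma> x)\<^sup>2"
proof (cases "x = 0")
  case True
  then show ?thesis using assms by simp
next
  case False
  have "bdd_below ((\<lambda>x. \<bar>\<sigma> x / x\<bar>) ` (- {0}))" by (rule bdd_belowI[of _ 0]) auto
  then have "L_sigma \<sigma> \<le> \<bar>\<sigma> x / x\<bar>" unfolding L_sigma_def using False by (intro cINF_lower) auto
  then have "L_sigma \<sigma> * \<bar>x\<bar> \<le> \<bar>\<sigma> x\<bar>"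
    using False by (simp add: abs_divide pos_le_divide_eq)
  then have "(L_sigma \<sigma> * \<bar>x\<bar>)\<^sup>2 \<le> (\<bar>\<sigma> x\<bar>)\<^sup>2" using assms by (intro power_mono) auto
  then show ?thesis by (simp add: power_mult_distrib)
qed

lemma lsc_real_neighbourhood:
  assumes "lsc_real h" "c < h x0"
  obtains r where "0 < r" "\<And>y. \<bar>y - x0\<bar> < r \<Longrightarrow> c < h y"
proof -
  have "\<forall>\<^sub>F y in at x0. c < h y" using assms unfolding lsc_real_def by blast
  then obtain r where "0 < r" "\<And>y. y \<noteq> x0 \<Longrightarrow> dist y x0 < r \<Longrightarrow> c < h y"
    unfolding eventually_at by auto
  with assms(2) show ?thesis
    by (intro that[of r]) (auto simp: dist_real_def, metis)
qed

locale wave_mild_solution = brownian_sheet_space M F W for M :: "'a measure" and F W +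
  fixes \<kappa> :: real and \<sigma> u0 v0 :: "real \<Rightarrow> real" and u :: "real \<Rightarrow> real \<Rightarrow> 'a \<Rightarrow> real" and L :: real
  assumes mild: "mild_solution M F W \<kappa> \<sigma> u0 v0 u"
    and \<sigma>_measurable [measurable]: "\<sigma> \<in> borel_measurable borel"
    and \<sigma>_lower: "\<And>x. L\<^sup>2 * x\<^sup>2 \<le> (\<sigma> x)\<^sup>2"
begin

text \<open>Predictability only makes u jointly measurable on [0, \<infinity>) \<times> R \<times> \<Omega>, hence the cut-off.\<close>

definition u_ext :: "real \<Rightarrow> real \<Rightarrow> 'a \<Rightarrow> real" where
  "u_ext s y \<omega> = (if 0 \<le> s then u s y \<omega> else 0)"

definition initial_term :: "real \<Rightarrow> real \<Rightarrow> real" where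
  "initial_term t x = (u0 (x + \<kappa> * t) + u0 (x - \<kappa> * t)) / 2
     + 1 / (2 * \<kappa>) * (LINT y:{x - \<kappa> * t .. x + \<kappa> * t}|lborel. v0 y)"

definition duhamel_integrand :: "real \<Rightarrow> real \<Rightarrow> real \<Rightarrow> real \<Rightarrow> 'a \<Rightarrow> real" where
  "duhamel_integrand t x s y \<omega> = indicator {0..t} s * wave_Gamma \<kappa> (t - s) (y - x) * \<sigma> (u s y \<omega>)"

definition second_moment :: "real \<times> real \<Rightarrow> ennreal" where
  "second_moment z = (\<integral>\<^sup>+\<omega>. ennreal ((u_ext (fst z) (snd z) \<omega>)\<^sup>2) \<partial>M)"

lemma u_ext_measurable [measurable]:
  "(\<lambda>p. u_ext (fst (fst p)) (snd (fst p)) (snd p)) \<in> borel_measurable ((lborel \<Otimes>\<^sub>M lborel) \<Otimes>\<^sub>M M)"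
  unfolding u_ext_def using predictable_field_measurable mild unfolding mild_solution_def by blast

lemma u_ext_measurable' [measurable]:
  "(\<lambda>p. u_ext (fst (snd p)) (snd (snd p)) (fst p)) \<in> borel_measurable (M \<Otimes>\<^sub>M (lborel \<Otimes>\<^sub>M lborel))"
  using measurable_pair_swap_iff[THEN iffD1, OF u_ext_measurable] by (simp add: split_beta')

lemma second_moment_measurable [measurable]: "second_moment \<in> borel_measurable (lborel \<Otimes>\<^sub>M lborel)"
proof -
  interpret sigma_finite_measure M by unfold_locales
  have "(\<lambda>p. ennreal ((u_ext (fst (fst p)) (snd (fst p)) (snd p))\<^sup>2)) \<in> borel_measurable ((lborel \<Otimes>\<^sub>M lborel) \<Otimes>\<^sub>M M)"
    by measurable
  from borel_measurable_nn_integral_fst[OF this] show ?thesis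
    unfolding second_moment_def[abs_def] by simp
qed

lemma duhamel_integrand_eq:
  "duhamel_integrand t x s y \<omega> = indicator {0..t} s *
     (1/2 * (indicator {0..} (y - x + \<kappa> * (t - s)) * indicator {0..} (x + \<kappa> * (t - s) - y))) * \<sigma> (u_ext s y \<omega>)"
  unfolding duhamel_integrand_def wave_Gamma_eq_indicators by (auto simp: u_ext_def indicator_def)

lemma duhamel_integrand_measurable:
  "(\<lambda>(\<omega>, z). duhamel_integrand t x (fst z) (snd z) \<omega>) \<in> borel_measurable (M \<Otimes>\<^sub>M (lborel \<Otimes>\<^sub>M lborel))"
  unfolding duhamel_integrand_eq split_beta' by measurable

text \<open>The stochastic term has mean zero, so it does not interact with the deterministic one.\<close>

lemma second_moment_decomposition:
  assumes "0 \<le> t"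
  obtains J where "has_walsh_integral M F W (duhamel_integrand t x) J"
    and "second_moment (t, x) = ennreal ((initial_term t x)\<^sup>2 + expectation (\<lambda>\<omega>. (J \<omega>)\<^sup>2))"
proof -
  obtain J where walsh: "has_walsh_integral M F W (duhamel_integrand t x) J"
    and mild_eq: "AE \<omega> in M. u t x \<omega> = initial_term t x + J \<omega>"
    using mild assms unfolding mild_solution_def duhamel_integrand_def[abs_def] initial_term_def by blast
  note J = walsh_integral_square_integrable[OF walsh] walsh_integral_mean_zero[OF walsh]
  define I where "I = initial_term t x"
  have "second_moment (t, x) = (\<integral>\<^sup>+\<omega>. ennreal ((I + J \<omega>)\<^sup>2) \<partial>M)"
    unfolding second_moment_def using assms mild_eq by (auto simp: u_ext_def I_def intro!: nn_integral_cong_AE)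
  also have "\<dots> = ennreal (expectation (\<lambda>\<omega>. (I + J \<omega>)\<^sup>2))"
    using integrable_square_add[of "\<lambda>_. I" M J] J by (intro nn_integral_eq_integral) auto
  also have "expectation (\<lambda>\<omega>. (I + J \<omega>)\<^sup>2) = I\<^sup>2 + expectation (\<lambda>\<omega>. (J \<omega>)\<^sup>2)"
  proof -
    have "(\<lambda>\<omega>. (I + J \<omega>)\<^sup>2) = (\<lambda>\<omega>. I\<^sup>2 + (2 * I * J \<omega> + (J \<omega>)\<^sup>2))"
      by (simp add: fun_eq_iff power2_eq_square algebra_simps)
    then show ?thesis using J by (simp add: prob_space)
  qed
  finally show ?thesis using that walsh by (simp add: I_def)
qed

lemma second_moment_ge_initial_term:
  assumes "0 \<le> t"
  shows "ennreal ((initial_term t x)\<^sup>2) \<le> second_moment (t, x)"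
  by (rule second_moment_decomposition[OF assms, of x]) (simp add: ennreal_leI)

lemma cone_integral_second_moment_eq:
  "cone_integral \<kappa> second_moment t x
    = (\<integral>\<^sup>+\<omega>. \<integral>\<^sup>+z. indicator {0..t} (fst z) * indicator {0..} (snd z - x + \<kappa> * (t - fst z)) *
        indicator {0..} (x + \<kappa> * (t - fst z) - snd z) * ennreal ((u_ext (fst z) (snd z) \<omega>)\<^sup>2) \<partial>(lborel \<Otimes>\<^sub>M lborel) \<partial>M)"
proof -
  define in_cone :: "real \<times> real \<Rightarrow> ennreal" where "in_cone z = indicator {0..t} (fst z) *
      indicator {0..} (snd z - x + \<kappa> * (t - fst z)) * indicator {0..} (x + \<kappa> * (t - fst z) - snd z)" for z
  have [measurable]: "in_cone \<in> borel_measurable (lborel \<Otimes>\<^sub>M lborel)"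
    unfolding in_cone_def by measurable
  interpret pair_sigma_finite M "lborel \<Otimes>\<^sub>M lborel"
    by (simp add: pair_sigma_finite_def lborel_pair.P.sigma_finite_measure_axioms prob_space_imp_sigma_finite
        prob_space_axioms)
  have "cone_integral \<kappa> second_moment t x = (\<integral>\<^sup>+z. in_cone z * second_moment z \<partial>(lborel \<Otimes>\<^sub>M lborel))"
    unfolding cone_integral_def in_cone_def
    using lborel.nn_integral_fst[of "\<lambda>z. indicator {0..t} (fst z) * indicator {0..} (snd z - x + \<kappa> * (t - fst z)) *
      indicator {0..} (x + \<kappa> * (t - fst z) - snd z) * second_moment z"]
    by simp
  also have "\<dots> = (\<integral>\<^sup>+z. \<integral>\<^sup>+\<omega>. in_cone z * ennreal ((u_ext (fst z) (snd z) \<omega>)\<^sup>2) \<partial>M \<partial>(lborel \<Otimes>\<^sub>M lborel))"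
  proof (rule nn_integral_cong)
    fix z :: "real \<times> real"
    have [measurable]: "u_ext (fst z) (snd z) \<in> borel_measurable M"
      using measurable_Pair2[OF u_ext_measurable, of z] by (simp add: space_pair_measure)
    show "in_cone z * second_moment z = (\<integral>\<^sup>+\<omega>. in_cone z * ennreal ((u_ext (fst z) (snd z) \<omega>)\<^sup>2) \<partial>M)"
      unfolding second_moment_def by (rule nn_integral_cmult[symmetric]) measurable
  qed
  also have "\<dots> = (\<integral>\<^sup>+\<omega>. \<integral>\<^sup>+z. in_cone z * ennreal ((u_ext (fst z) (snd z) \<omega>)\<^sup>2) \<partial>(lborel \<Otimes>\<^sub>M lborel) \<partial>M)"
  proof -
    have "(\<lambda>(\<omega>, z). in_cone z * ennreal ((u_ext (fst z) (snd z) \<omega>)\<^sup>2)) \<in> borel_measurable (M \<Otimes>\<^sub>M (lborel \<Otimes>\<^sub>M lborel))"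
      unfolding split_beta' by measurable
    from Fubini'[OF this] show ?thesis .
  qed
  finally show ?thesis by (simp add: in_cone_def)
qed

text \<open>On the backward cone the Duhamel integrand is \<sigma>(u)/2, and |\<sigma>(u)| \<ge> L |u|.\<close>

lemma second_moment_ge_cone_integral:
  assumes "0 \<le> t"
  shows "ennreal (L\<^sup>2 / 4) * cone_integral \<kappa> second_moment t x \<le> second_moment (t, x)"
proof -
  obtain J where walsh: "has_walsh_integral M F W (duhamel_integrand t x) J"
    and moment: "second_moment (t, x) = ennreal ((initial_term t x)\<^sup>2 + expectation (\<lambda>\<omega>. (J \<omega>)\<^sup>2))"
    using second_moment_decomposition[OF assms] .
  define in_cone :: "real \<times> real \<Rightarrow> ennreal" where "in_cone z = indicator {0..t} (fst z) *
      indicator {0..} (snd z - x + \<kappa> * (t - fst z)) * indicator {0..} (x + \<kappa> * (t - fst z) - snd z)" for z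
  have integrand_ge: "ennreal (L\<^sup>2 / 4) * (in_cone z * ennreal ((u_ext (fst z) (snd z) \<omega>)\<^sup>2))
      \<le> ennreal ((duhamel_integrand t x (fst z) (snd z) \<omega>)\<^sup>2)" for z \<omega>
  proof (cases "fst z \<in> {0..t} \<and> 0 \<le> snd z - x + \<kappa> * (t - fst z) \<and> 0 \<le> x + \<kappa> * (t - fst z) - snd z")
    case True
    then have on_cone: "duhamel_integrand t x (fst z) (snd z) \<omega> = 1/2 * \<sigma> (u_ext (fst z) (snd z) \<omega>)"
      by (simp add: duhamel_integrand_eq indicator_def)
    have "L\<^sup>2 / 4 * (u_ext (fst z) (snd z) \<omega>)\<^sup>2 \<le> (duhamel_integrand t x (fst z) (snd z) \<omega>)\<^sup>2"
      unfolding on_cone using \<sigma>_lower[of "u_ext (fst z) (snd z) \<omega>"]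
      by (simp add: power_mult_distrib power2_eq_square field_simps)
    then show ?thesis using True by (simp add: in_cone_def indicator_def ennreal_mult[symmetric] ennreal_leI)
  qed (auto simp: in_cone_def indicator_def)
  have [measurable]: "in_cone \<in> borel_measurable (lborel \<Otimes>\<^sub>M lborel)"
    unfolding in_cone_def by measurable
  have joint: "(\<lambda>(\<omega>, z). in_cone z * ennreal ((u_ext (fst z) (snd z) \<omega>)\<^sup>2))
      \<in> borel_measurable (M \<Otimes>\<^sub>M (lborel \<Otimes>\<^sub>M lborel))"
    unfolding split_beta' by measurable
  have "ennreal (L\<^sup>2 / 4) * cone_integral \<kappa> second_moment t x
      = (\<integral>\<^sup>+\<omega>. ennreal (L\<^sup>2 / 4) * (\<integral>\<^sup>+z. in_cone z * ennreal ((u_ext (fst z) (snd z) \<omega>)\<^sup>2) \<partial>(lborel \<Otimes>\<^sub>M lborel)) \<partial>M)"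
    unfolding cone_integral_second_moment_eq in_cone_def[symmetric]
    using lborel_pair.P.borel_measurable_nn_integral_fst[OF joint] by (simp add: nn_integral_cmult)
  also have "\<dots> = (\<integral>\<^sup>+\<omega>. \<integral>\<^sup>+z. ennreal (L\<^sup>2 / 4) * (in_cone z * ennreal ((u_ext (fst z) (snd z) \<omega>)\<^sup>2))
      \<partial>(lborel \<Otimes>\<^sub>M lborel) \<partial>M)"
    using measurable_Pair2[OF joint] by (intro nn_integral_cong nn_integral_cmult[symmetric]) simp
  also have "\<dots> \<le> (\<integral>\<^sup>+\<omega>. \<integral>\<^sup>+z. ennreal ((duhamel_integrand t x (fst z) (snd z) \<omega>)\<^sup>2) \<partial>(lborel \<Otimes>\<^sub>M lborel) \<partial>M)"
    using integrand_ge by (intro nn_integral_mono) auto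
  also have "\<dots> \<le> (\<integral>\<^sup>+\<omega>. ennreal ((J \<omega>)\<^sup>2) \<partial>M)"
    by (rule walsh_integral_isometry_le[OF walsh duhamel_integrand_measurable])
  also have "\<dots> \<le> second_moment (t, x)"
    using walsh_integral_square_integrable(2)[OF walsh] unfolding moment
    by (simp add: nn_integral_eq_integral ennreal_leI)
  finally show ?thesis .
qed

lemma initial_term_ge:
  assumes "\<And>x. 0 \<le> u0 x" "\<And>x. 0 \<le> v0 x" "0 < \<kappa>" "c \<le> u0 (x - \<kappa> * t)"
  shows "c / 2 \<le> initial_term t x"
proof -
  have "0 \<le> (LINT y:{x - \<kappa> * t .. x + \<kappa> * t}|lborel. v0 y)"
    unfolding set_lebesgue_integral_def using assms(2)
    by (intro Bochner_Integration.integral_nonneg) (simp add: indicator_def)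
  then have "0 \<le> 1 / (2 * \<kappa>) * (LINT y:{x - \<kappa> * t .. x + \<kappa> * t}|lborel. v0 y)"
    using assms(3) by simp
  moreover have "c / 2 \<le> (A + B) / 2 + V" if "0 \<le> V" "0 \<le> A" "c \<le> B" for A B V :: real
    using that by (simp add: field_simps)
  ultimately show ?thesis
    using assms(1)[of "x + \<kappa> * t"] assms(4) unfolding initial_term_def by blast
qed

text \<open>Behind the right-moving front x = x0 + \<kappa> t of the initial bump, the initial term alone keeps
  the second moment bounded below on an interval of fixed length, which lies beyond the line
  x = \<alpha> t once t is large.\<close>

lemma front_mass_second_moment_ge:
  assumes "\<And>x. 0 \<le> u0 x" "\<And>x. 0 \<le> v0 x" "0 < \<kappa>"
    and bump: "\<And>y. \<bar>y - x0\<bar> < r \<Longrightarrow> c \<le> u0 y" "0 < r" "0 \<le> c"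
    and "0 \<le> t" "\<alpha> * t \<le> x0 + \<kappa> * t - r"
  shows "ennreal (c\<^sup>2 / 4 * (2 * r)) \<le> front_mass \<alpha> second_moment t"
proof -
  have "ennreal (c\<^sup>2 / 4 * (2 * r))
      = (\<integral>\<^sup>+x. ennreal (c\<^sup>2 / 4) * indicator {x0 + \<kappa> * t - r <..< x0 + \<kappa> * t + r} x \<partial>lborel)"
    using bump(2,3) by (simp add: nn_integral_cmult_indicator ennreal_mult[symmetric])
  also have "\<dots> \<le> front_mass \<alpha> second_moment t"
    unfolding front_mass_def
  proof (rule nn_integral_mono)
    fix x
    show "ennreal (c\<^sup>2 / 4) * indicator {x0 + \<kappa> * t - r <..< x0 + \<kappa> * t + r} x
        \<le> indicator {0..} (x - \<alpha> * t) * second_moment (t, x)"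
    proof (cases "x \<in> {x0 + \<kappa> * t - r <..< x0 + \<kappa> * t + r}")
      case True
      then have "c / 2 \<le> initial_term t x"
        using bump(1)[of "x - \<kappa> * t"] by (intro initial_term_ge assms(1-3)) auto
      then have "ennreal ((c / 2)\<^sup>2) \<le> ennreal ((initial_term t x)\<^sup>2)"
        using bump(3) by (intro ennreal_leI power_mono) auto
      also have "\<dots> \<le> second_moment (t, x)" by (rule second_moment_ge_initial_term[OF assms(7)])
      finally show ?thesis
        using True assms(8) by (simp add: indicator_def power_divide)
    qed simp
  qed
  finally show ?thesis .
qed

lemma nn_laplace_front_mass_second_moment_pos:
  assumes "\<And>x. 0 \<le> u0 x" "\<And>x. 0 \<le> v0 x" "lsc_real u0" "0 < u0 x0"
    and "0 < \<kappa>" "0 < \<alpha>" "\<alpha> < \<kappa>" "0 < \<beta>"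
  shows "nn_laplace \<beta> (front_mass \<alpha> second_moment) \<noteq> 0"
proof -
  define c where "c = u0 x0 / 2"
  have c: "0 < c" "c < u0 x0" using assms(4) by (simp_all add: c_def)
  obtain r where r: "0 < r" "\<And>y. \<bar>y - x0\<bar> < r \<Longrightarrow> c < u0 y"
    using lsc_real_neighbourhood[OF assms(3) c(2)] by blast
  define T where "T = max 0 ((r - x0) / (\<kappa> - \<alpha>))"
  define C where "C = exp (- \<beta> * (T + 1)) * (c\<^sup>2 / 4 * (2 * r))"
  have "indicator {T..T+1} t * ennreal C
      \<le> indicator {0..} t * ennreal (exp (- \<beta> * t)) * front_mass \<alpha> second_moment t" for t
  proof (cases "t \<in> {T..T+1}")
    case True
    then have t: "0 \<le> t" "T \<le> t" "t \<le> T + 1" by (auto simp: T_def)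
    then have "r - x0 \<le> (\<kappa> - \<alpha>) * t" using assms(7) by (simp add: T_def field_simps)
    then have mass: "ennreal (c\<^sup>2 / 4 * (2 * r)) \<le> front_mass \<alpha> second_moment t"
      using r c t by (intro front_mass_second_moment_ge assms(1,2,5)) (auto simp: algebra_simps less_imp_le)
    have decay: "ennreal (exp (- \<beta> * (T + 1))) \<le> ennreal (exp (- \<beta> * t))"
      using t assms(8) by (intro ennreal_leI) simp
    have "ennreal (exp (- \<beta> * (T + 1))) * ennreal (c\<^sup>2 / 4 * (2 * r))
        \<le> ennreal (exp (- \<beta> * t)) * front_mass \<alpha> second_moment t"
      by (rule mult_mono[OF decay mass]) auto
    moreover have "ennreal C = ennreal (exp (- \<beta> * (T + 1))) * ennreal (c\<^sup>2 / 4 * (2 * r))"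
      unfolding C_def using r by (intro ennreal_mult) auto
    ultimately show ?thesis using True t by (simp add: indicator_def)
  qed simp
  then have "(\<integral>\<^sup>+t. indicator {T..T+1} t * ennreal C \<partial>lborel) \<le> nn_laplace \<beta> (front_mass \<alpha> second_moment)"
    unfolding nn_laplace_def by (intro nn_integral_mono)
  moreover have "0 < (\<integral>\<^sup>+t. indicator {T..T+1} t * ennreal C \<partial>lborel)"
    using c r by (subst nn_integral_multc) (auto simp: C_def)
  ultimately show ?thesis by auto
qed

lemma M_ab_eq_infinity:
  assumes "0 \<le> \<alpha>" "nn_laplace \<beta> (front_mass \<alpha> second_moment) = \<infinity>"
  shows "M_ab M \<alpha> \<beta> u = \<infinity>"
proof -
  have "nn_laplace \<beta> (front_mass \<alpha> second_moment)
      \<le> (\<integral>\<^sup>+ t \<in> {0..}. ennreal (exp (- \<beta> * t)) *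
          (\<integral>\<^sup>+ x \<in> {x. \<alpha> * t \<le> \<bar>x\<bar>}. (\<integral>\<^sup>+ \<omega>. ennreal ((u t x \<omega>)\<^sup>2) \<partial>M) \<partial>lborel) \<partial>lborel)"
    unfolding nn_laplace_def front_mass_def
  proof (intro nn_integral_mono)
    fix t :: real
    have "(\<integral>\<^sup>+x. indicator {0..} (x - \<alpha> * t) * second_moment (t, x) \<partial>lborel)
        \<le> (\<integral>\<^sup>+ x \<in> {x. \<alpha> * t \<le> \<bar>x\<bar>}. (\<integral>\<^sup>+ \<omega>. ennreal ((u t x \<omega>)\<^sup>2) \<partial>M) \<partial>lborel)" if "0 \<le> t"
      using that assms(1) by (intro nn_integral_mono) (auto simp: indicator_def second_moment_def u_ext_def)
    then show "indicator {0..} t * ennreal (exp (- \<beta> * t)) *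
        (\<integral>\<^sup>+x. indicator {0..} (x - \<alpha> * t) * second_moment (t, x) \<partial>lborel)
      \<le> ennreal (exp (- \<beta> * t)) *
        (\<integral>\<^sup>+ x \<in> {x. \<alpha> * t \<le> \<bar>x\<bar>}. (\<integral>\<^sup>+ \<omega>. ennreal ((u t x \<omega>)\<^sup>2) \<partial>M) \<partial>lborel) * indicator {0..} t"
      by (cases "0 \<le> t") (auto simp: mult.commute intro: mult_left_mono)
  qed
  then show ?thesis
    using assms(2) unfolding M_ab_def Let_def by (simp add: top_unique)
qed

end

lemma speed_gap:
  fixes L \<alpha> \<beta> \<kappa> :: real
  assumes "0 < L" "\<alpha> < \<kappa> - 4 * \<beta>\<^sup>2 / L\<^sup>2"
  shows "\<alpha> < \<kappa>" "\<beta>\<^sup>2 < L\<^sup>2 / 4 * (\<kappa> - \<alpha>)"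
proof -
  have "0 \<le> 4 * \<beta>\<^sup>2 / L\<^sup>2" by simp
  then show "\<alpha> < \<kappa>" using assms(2) by linarith
  have "4 * \<beta>\<^sup>2 / L\<^sup>2 < \<kappa> - \<alpha>" using assms(2) by simp
  then have "4 * \<beta>\<^sup>2 < (\<kappa> - \<alpha>) * L\<^sup>2" using assms(1) by (simp add: divide_less_eq)
  then show "\<beta>\<^sup>2 < L\<^sup>2 / 4 * (\<kappa> - \<alpha>)" by (simp add: mult.commute)
qed

theorem proposition5p4:
  fixes M :: "'a measure" and F :: "real \<Rightarrow> 'a measure" and W :: "real \<Rightarrow> real \<Rightarrow> 'a \<Rightarrow> real"
    and \<kappa> \<alpha> \<beta> :: real and \<sigma> u0 v0 :: "real \<Rightarrow> real" and u :: "real \<Rightarrow> real \<Rightarrow> 'a \<Rightarrow> real"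
  assumes "brownian_sheet M F W"
    and "\<kappa> > 0"
    and "\<exists>L. L-lipschitz_on UNIV \<sigma>"
    and "\<sigma> 0 = 0"
    and "L_sigma \<sigma> > 0"
    and "u0 \<in> D_exp" and "v0 \<in> D_exp"
    and "emeasure lborel {x. u0 x > 0} > 0"
    and "\<forall>x. v0 x \<ge> 0"
    and "mild_solution M F W \<kappa> \<sigma> u0 v0 u"
    and "\<beta> > 0"
    and "0 < \<alpha>" and "\<alpha> < \<kappa> - 4 * \<beta>\<^sup>2 / (L_sigma \<sigma>)\<^sup>2"
  shows "M_ab M \<alpha> \<beta> u = \<infinity>"
proof -
  interpret brownian_sheet_space M F W by unfold_locales (fact assms(1))
  obtain C where "C-lipschitz_on UNIV \<sigma>" using assms(3) by blast
  then have "\<sigma> \<in> borel_measurable borel"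
    by (intro borel_measurable_continuous_onI lipschitz_on_continuous_on)
  moreover have "(L_sigma \<sigma>)\<^sup>2 * x\<^sup>2 \<le> (\<sigma> x)\<^sup>2" for x
    by (rule L_sigma_sq_le[OF assms(5,4)])
  ultimately interpret wave_mild_solution M F W \<kappa> \<sigma> u0 v0 u "L_sigma \<sigma>"
    using assms(1,10) by unfold_locales auto
  note gap = speed_gap[OF assms(5,13)]
  obtain x0 where "0 < u0 x0"
    using assms(8) by (metis Collect_empty_eq emeasure_empty less_irrefl)
  moreover have "\<And>x. 0 \<le> u0 x" "lsc_real u0" using assms(6) by (auto simp: D_exp_def)
  ultimately have "nn_laplace \<beta> (front_mass \<alpha> second_moment) \<noteq> 0"
    by (intro nn_laplace_front_mass_second_moment_pos[OF _ assms(9)[rule_format]] assms(2,11,12) gap(1))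
  then have "nn_laplace \<beta> (front_mass \<alpha> second_moment) = \<infinity>"
    using second_moment_ge_cone_integral
    by (intro nn_laplace_front_mass_eq_infinity[OF second_moment_measurable assms(12) gap(1) assms(11) gap(2)])
      auto
  then show ?thesis
    using assms(12) by (intro M_ab_eq_infinity) auto
qed

end
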